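(* Every probabilistic function computed by a probabilistic Turing machine is probabilistic recursive: $\mathscr{PC}\subseteq\mathscr{PR}$.
   Context: A pseudodistribution on a countable set $X$ is $\mathcal D:X\to[0,1]$ with $\sum_x\mathcal D(x)\le1$; $\mathcal D(X)$ is their set. A PF of arity $k$ is a function $\mathbb{N}^k\to\mathcal D(\mathbb{N})$. Basic PFs: $z(n)(0)=1$; $s(n)(n+1)=1$; $\Pi^n_m(k_1,\dots,k_n)(k_m)=1$; $r(x)(x)=r(x)(x+1)=1/2$ (other values $0$). Generalized composition $(f\odot(g_1,\dots,g_n))(\vec x)(y)=\sum_{z_1,\dots,z_n} f(z_1,\dots,z_n)(y)\prod_i g_i(\vec x)(z_i)$; primitive recursion $h=\mathrm{rec}(f,g)$: $h(\vec x,0)=f(\vec x)$, $h(\vec x,y+1)(w)=\sum_z h(\vec x,y)(z)\, g(\vec x,y,z)(w)$; minimization $\mu f(\vec x)(y)=f(\vec x,y)(0)\prod_{z<y}\sum_{k>0}f(\vec x,z)(k)$. $\mathscr{PR}$ is the smallest class of PFs containing the basic PFs and closed under these three operations. PTMs: Turing machines with tape alphabet $\Sigma_b\supseteq\{0,1\}$ plus blank, states $Q$, initial $q_s$, final states $Q_f$, and two transition functions $\delta_0,\delta_1$ on non-final configurations, each applied with probability $1/2$; configurations $\langle s,a,t,q\rangle$, initial configuration on $a\cdot v$ is $\langle\varepsilon,a,v,q_s\rangle$, final configuration with output $s$ is $\langle s,a,\varepsilon,q\rangle$, $q\in Q_f$. $\mathcal{IO}_M(s)(t)=\sum 2^{-|b|}$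 over choice sequences $b\in\{0,1\}^*$ that from the initial configuration on $s$ first reach a final configuration with output $t$ after exactly $|b|$ steps. With $n\mapsto\overline n$ the length-lexicographic bijection $\mathbb{N}\to\{0,1\}^*$ and $\langle\vec x\rangle$ a fixed computable string encoding of tuples, $\mathscr{PC}$ is the set of PFs $f$ with $f(\vec x)(y)=\mathcal{IO}_M(\langle\vec x\rangle)(\overline y)$ for some PTM $M$ and all $\vec x,y$. *)

theory Defs
  imports "HOL-Analysis.Infinite_Sum"
begin

text \<open>A PF of arity k is modelled as a function on argument lists (only lists of
length k are meaningful) returning a (pseudo)distribution on nat, i.e. a
function nat to real.\<close>

type_synonym pf = "nat list \<Rightarrow> nat \<Rightarrow> real"

primrec prec :: "pf \<Rightarrow> pf \<Rightarrow> nat list \<Rightarrow> nat \<Rightarrow> nat \<Rightarrow> real" where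
  "prec f g xs 0 = f xs"
| "prec f g xs (Suc y) =
     (\<lambda>w. \<Sum>\<^sub>\<infinity>z\<in>UNIV. prec f g xs y z * g (xs @ [y, z]) w)"

definition pf_comp :: "pf \<Rightarrow> pf list \<Rightarrow> pf" where
  "pf_comp f gs = (\<lambda>xs y. \<Sum>\<^sub>\<infinity>zs\<in>{zs. length zs = length gs}.
      f zs y * (\<Prod>i<length gs. (gs ! i) xs (zs ! i)))"

definition pf_rec :: "pf \<Rightarrow> pf \<Rightarrow> pf" where
  "pf_rec f g = (\<lambda>xs. prec f g (butlast xs) (last xs))"

definition pf_mu :: "pf \<Rightarrow> pf" where
  "pf_mu f = (\<lambda>xs y. f (xs @ [y]) 0 *
      (\<Prod>z<y. \<Sum>\<^sub>\<infinity>k\<in>{0<..}. f (xs @ [z]) k))"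

inductive PR :: "nat \<Rightarrow> pf \<Rightarrow> bool" where
  PR_zero: "PR 1 (\<lambda>xs y. if y = 0 then 1 else 0)"
| PR_succ: "PR 1 (\<lambda>xs y. if y = Suc (hd xs) then 1 else 0)"
| PR_proj: "1 \<le> m \<Longrightarrow> m \<le> n \<Longrightarrow> PR n (\<lambda>xs y. if y = xs ! (m - 1) then 1 else 0)"
| PR_rand: "PR 1 (\<lambda>xs y. if y = hd xs \<or> y = Suc (hd xs) then 1 / 2 else 0)"
| PR_comp: "PR (length gs) f \<Longrightarrow> (\<forall>g\<in>set gs. PR k g) \<Longrightarrow> PR k (pf_comp f gs)"
| PR_rec: "PR k f \<Longrightarrow> PR (k + 2) g \<Longrightarrow> PR (k + 1) (pf_rec f g)"
| PR_mu: "PR (k + 1) f \<Longrightarrow> PR k (pf_mu f)"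

datatype move = MLeft | MRight | MStay

text \<open>Tape symbols: Some a for a in the alphabet, None is the blank.
Bits 0 and 1 are Some 0 and Some 1.\<close>
type_synonym sym = "nat option"

record ptm =
  states :: "nat set"
  alphabet :: "nat set"
  start :: nat
  finals :: "nat set"
  delta0 :: "nat \<Rightarrow> sym \<Rightarrow> nat \<times> sym \<times> move"
  delta1 :: "nat \<Rightarrow> sym \<Rightarrow> nat \<times> sym \<times> move"

definition wf_ptm :: "ptm \<Rightarrow> bool" where
  "wf_ptm M \<longleftrightarrow> finite (states M) \<and> finite (alphabet M) \<and> {0, 1} \<subseteq> alphabet M
     \<and> start M \<in> states M \<and> finals M \<subseteq> states M
     \<and> (\<forall>q\<in>states M - finals M. \<forall>a\<in>insert None (Some ` alphabet M).
          delta0 M q a \<in> states M \<times> insert None (Some ` alphabet M) \<times> UNIV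
        \<and> delta1 M q a \<in> states M \<times> insert None (Some ` alphabet M) \<times> UNIV)"

text \<open>Configuration (s, a, t, q): s left of the head (left to right), a under the
head, t right of the head, q the state.\<close>
type_synonym config = "sym list \<times> sym \<times> sym list \<times> nat"

fun apply_move :: "sym list \<Rightarrow> sym \<Rightarrow> sym list \<Rightarrow> nat \<Rightarrow> move \<Rightarrow> config" where
  "apply_move s a t q MStay = (s, a, t, q)"
| "apply_move s a t q MRight =
     (s @ [a], (if t = [] then None else hd t), tl t, q)"
| "apply_move s a t q MLeft =
     (if s = [] then ([], None, a # t, q) else (butlast s, last s, a # t, q))"

fun step :: "ptm \<Rightarrow> bool \<Rightarrow> config \<Rightarrow> config" where
  "step M b (s, a, t, q) =
     (if q \<in> finals M then (s, a, t, q)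
      else (case (if b then delta1 M else delta0 M) q a of
              (q', a', m) \<Rightarrow> apply_move s a' t q' m))"

text \<open>Run following a sequence of choices (False = delta0, True = delta1).\<close>
definition run :: "ptm \<Rightarrow> bool list \<Rightarrow> config \<Rightarrow> config" where
  "run M bs c = fold (step M) bs c"

definition initial :: "ptm \<Rightarrow> sym list \<Rightarrow> config" where
  "initial M v = (if v = [] then ([], None, [], start M) else ([], hd v, tl v, start M))"

definition is_final :: "ptm \<Rightarrow> config \<Rightarrow> bool" where
  "is_final M c \<longleftrightarrow> snd (snd (snd c)) \<in> finals M"

definition halts_with :: "ptm \<Rightarrow> sym list \<Rightarrow> bool list \<Rightarrow> sym list \<Rightarrow> bool" where
  "halts_with M v bs u \<longleftrightarrow>
     (\<forall>i<length bs. \<not> is_final M (run M (take i bs) (initial M v)))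
     \<and> (\<exists>a q. run M bs (initial M v) = (u, a, [], q) \<and> q \<in> finals M)"

definition IO :: "ptm \<Rightarrow> sym list \<Rightarrow> sym list \<Rightarrow> real" where
  "IO M v u = (\<Sum>\<^sub>\<infinity>bs\<in>{bs. halts_with M v bs u}. (1 / 2) ^ length bs)"

text \<open>Length-lexicographic bijection nat to binary strings:
0 to empty, 1 to 0, 2 to 1, 3 to 00, ...\<close>
fun bin :: "nat \<Rightarrow> nat list" where
  "bin 0 = []"
| "bin (Suc n) = bin (n div 2) @ [n mod 2]"

definition bits :: "nat list \<Rightarrow> sym list" where
  "bits w = map Some w"

definition enc_tuple :: "nat list \<Rightarrow> nat list" where
  "enc_tuple xs = concat (map (\<lambda>x. concat (map (\<lambda>b. [b, b]) (bin x)) @ [0, 1]) xs)"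

definition PC :: "nat \<Rightarrow> pf \<Rightarrow> bool" where
  "PC k f \<longleftrightarrow> (\<exists>M. wf_ptm M \<and>
     (\<forall>xs y. length xs = k \<longrightarrow> f xs y = IO M (bits (enc_tuple xs)) (bits (bin y))))"

end

theory Submission
  imports Defs "HOL-Library.Nat_Bijection"
begin

text \<open>
  Index the choice sequences by natural numbers, z \<mapsto> choice_seq z, with
  length (choice_seq z) \<le> z.  Running M on input xs along choice_seq z is a
  deterministic computation of at most z steps, so "the run halts", "its output" and
  "its length" are ordinary primitive recursive functions of (xs, z).  The probability
  IO M v u is the sum over z of w z = 2^(-length (choice_seq z)) restricted to the halting
  runs with output u.  The weights w are sampled by a PR distribution: minimization over
  independent Bernoulli trials with success probabilities w z / (1 - \<Sum>i<z. w i)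
  (a telescoping product; Kraft's inequality keeps these \<le> 1).  A Bernoulli trial with
  rational probability a/c is a geometrically distributed index j (minimization over the
  fair coin r) followed by reading the j-th binary digit of a/c.  Composing the sampler of z
  with the indicator "output of run z is u" yields IO M (enc xs) (bin u).
\<close>

lemma infsum_single_supp:
  fixes f :: "'a \<Rightarrow> real"
  assumes "a \<in> A" "\<And>x. x \<in> A \<Longrightarrow> x \<noteq> a \<Longrightarrow> f x = 0"
  shows "infsum f A = f a"
proof -
  have "infsum f A = infsum f {a}"
    by (rule infsum_cong_neutral) (use assms in auto)
  then show ?thesis by simp
qed

lemma infsum_nat_sums:
  fixes f :: "nat \<Rightarrow> real"
  assumes "f sums S" "\<And>n. 0 \<le> f n"
  shows "infsum f UNIV = S"
  using sums_nonneg_imp_has_sum[OF assms] by (rule infsumI)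

lemma half_pow_sums: "(\<lambda>j. (1/2::real) ^ Suc j) sums 1"
proof -
  have "(\<lambda>j. (1/2::real) ^ j) sums (1 / (1 - 1/2))" by (rule geometric_sums) simp
  then have "(\<lambda>j. (1/2) * (1/2::real) ^ j) sums ((1/2) * (1 / (1 - 1/2)))" by (rule sums_mult)
  then show ?thesis by simp
qed

definition PR_ext :: "nat \<Rightarrow> pf \<Rightarrow> bool" where
  "PR_ext k f \<longleftrightarrow> (\<exists>F. PR k F \<and> (\<forall>xs. length xs = k \<longrightarrow> F xs = f xs))"

lemma PR_ext_cong: "PR_ext k f \<Longrightarrow> (\<And>xs. length xs = k \<Longrightarrow> f xs = g xs) \<Longrightarrow> PR_ext k g"
  unfolding PR_ext_def by metis

lemma PR_PR_ext: "PR k F \<Longrightarrow> PR_ext k F"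
  unfolding PR_ext_def by auto

lemma list_choice:
  assumes "\<forall>g\<in>set gs. \<exists>G. P g G"
  shows "\<exists>Gs. length Gs = length gs \<and> (\<forall>i<length gs. P (gs!i) (Gs!i))"
  using assms
proof (induction gs)
  case Nil then show ?case by simp
next
  case (Cons g gs)
  then obtain Gs where Gs: "length Gs = length gs" "\<forall>i<length gs. P (gs!i) (Gs!i)" by auto
  from Cons.prems obtain G where "P g G" by auto
  then show ?case using Gs
    by (intro exI[of _ "G#Gs"]) (auto simp: nth_Cons split: nat.splits)
qed

lemma PR_ext_comp:
  assumes f: "PR_ext (length gs) f" and gs: "\<forall>g\<in>set gs. PR_ext k g"
  shows "PR_ext k (pf_comp f gs)"
proof -
  from f obtain F where F: "PR (length gs) F" "\<And>zs. length zs = length gs \<Longrightarrow> F zs = f zs"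
    unfolding PR_ext_def by auto
  from gs have "\<forall>g\<in>set gs. \<exists>G. PR k G \<and> (\<forall>xs. length xs = k \<longrightarrow> G xs = g xs)"
    unfolding PR_ext_def by auto
  from list_choice[OF this] obtain Gs where Gs: "length Gs = length gs"
    "\<And>i. i < length gs \<Longrightarrow> PR k (Gs!i) \<and> (\<forall>xs. length xs = k \<longrightarrow> (Gs!i) xs = (gs!i) xs)"
    by auto
  have "PR (length Gs) F" using F Gs by simp
  moreover have "\<forall>G\<in>set Gs. PR k G" using Gs by (auto simp: in_set_conv_nth)
  ultimately have "PR k (pf_comp F Gs)" by (rule PR_comp)
  moreover have "pf_comp F Gs xs = pf_comp f gs xs" if "length xs = k" for xs
  proof (rule ext)
    fix y
    show "pf_comp F Gs xs y = pf_comp f gs xs y"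
      unfolding pf_comp_def Gs(1)
    proof (rule infsum_cong)
      fix zs :: "nat list" assume "zs \<in> {zs. length zs = length gs}"
      then have "length zs = length gs" using Gs by simp
      then show "F zs y * (\<Prod>i<length gs. (Gs ! i) xs (zs ! i)) =
           f zs y * (\<Prod>i<length gs. (gs ! i) xs (zs ! i))"
        using Gs that by (auto intro!: prod.cong simp: F(2))
    qed
  qed
  ultimately show ?thesis unfolding PR_ext_def by auto
qed

lemma PR_ext_rec:
  assumes f: "PR_ext k f" and g: "PR_ext (k+2) g"
  shows "PR_ext (k+1) (pf_rec f g)"
proof -
  from f obtain F where F: "PR k F" "\<And>zs. length zs = k \<Longrightarrow> F zs = f zs"
    unfolding PR_ext_def by auto
  from g obtain G where G: "PR (k+2) G" "\<And>zs. length zs = k+2 \<Longrightarrow> G zs = g zs"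
    unfolding PR_ext_def by auto
  have "PR (k+1) (pf_rec F G)" using F G by (intro PR_rec) auto
  moreover have "prec F G xs y = prec f g xs y" if "length xs = k" for xs y
    using that by (induction y) (auto simp: F G)
  ultimately show ?thesis unfolding PR_ext_def pf_rec_def
    by (intro exI[of _ "pf_rec F G"]) (auto simp: pf_rec_def)
qed

lemma PR_ext_mu:
  assumes f: "PR_ext (k+1) f"
  shows "PR_ext k (pf_mu f)"
proof -
  from f obtain F where F: "PR (k+1) F" "\<And>zs. length zs = k+1 \<Longrightarrow> F zs = f zs"
    unfolding PR_ext_def by auto
  have "PR k (pf_mu F)" using F by (intro PR_mu)
  moreover have "pf_mu F xs = pf_mu f xs" if "length xs = k" for xs
    using that by (auto simp: pf_mu_def F)
  ultimately show ?thesis unfolding PR_ext_def by auto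
qed

section \<open>Deterministic recursive functions as Dirac distributions\<close>

definition dirac :: "(nat list \<Rightarrow> nat) \<Rightarrow> pf" where
  "dirac h = (\<lambda>xs y. if y = h xs then 1 else 0)"

definition PR_fun :: "nat \<Rightarrow> (nat list \<Rightarrow> nat) \<Rightarrow> bool" where
  "PR_fun k h \<longleftrightarrow> PR_ext k (dirac h)"

lemma PR_fun_cong: "PR_fun k f \<Longrightarrow> (\<And>xs. length xs = k \<Longrightarrow> f xs = g xs) \<Longrightarrow> PR_fun k g"
  unfolding PR_fun_def by (erule PR_ext_cong) (simp add: dirac_def)

lemma prod_indicator:
  "(\<Prod>i<(n::nat). (if P i then 1 else 0 :: real)) = (if \<forall>i<n. P i then 1 else 0)"
  by (induction n) (auto simp: less_Suc_eq)

lemma comp_dirac: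
  assumes "length hs = n"
  shows "pf_comp F (map dirac hs) xs y = F (map (\<lambda>h. h xs) hs) y"
proof -
  let ?a = "map (\<lambda>h. h xs) hs"
  have "pf_comp F (map dirac hs) xs y =
     (\<Sum>\<^sub>\<infinity>zs\<in>{zs. length zs = length hs}. F zs y * (if \<forall>i<length hs. zs!i = (hs!i) xs then 1 else 0))"
    unfolding pf_comp_def by (simp add: dirac_def prod_indicator)
  also have "\<dots> = F ?a y * (if \<forall>i<length hs. ?a!i = (hs!i) xs then 1 else 0)"
    by (rule infsum_single_supp) (auto intro: nth_equalityI)
  finally show ?thesis by simp
qed

definition projs :: "nat \<Rightarrow> (nat list \<Rightarrow> nat) list" where
  "projs k = map (\<lambda>i xs. xs ! i) [0..<k]"

lemma map_projs: "length xs \<ge> k \<Longrightarrow> map (\<lambda>h. h xs) (projs k) = take k xs"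
  unfolding projs_def by (auto intro: nth_equalityI)

lemma length_projs[simp]: "length (projs k) = k" by (simp add: projs_def)

lemma comp_bind_weight:
  assumes "length xs = k" "length zs = Suc k"
  shows "(\<Prod>i<Suc k. ((map dirac (projs k) @ [G]) ! i) xs (zs ! i)) =
      (if take k zs = xs then G xs (zs!k) else 0)"
proof -
  let ?gs = "map dirac (projs k) @ [G]"
  have "(\<Prod>i<Suc k. (?gs ! i) xs (zs ! i)) =
      (\<Prod>i<k. (?gs ! i) xs (zs ! i)) * G xs (zs!k)"
    by (simp add: nth_append)
  also have "(\<Prod>i<k. (?gs ! i) xs (zs ! i)) = (\<Prod>i<k. (if zs!i = xs!i then 1 else 0))"
    by (intro prod.cong) (auto simp: nth_append projs_def dirac_def)
  also have "\<dots> = (if take k zs = xs then 1 else 0)"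
  proof -
    have "(\<forall>i<k. zs!i = xs!i) \<longleftrightarrow> take k zs = xs"
      using assms by (auto intro!: nth_equalityI) (metis nth_take)
    then show ?thesis unfolding prod_indicator by simp
  qed
  finally show ?thesis by simp
qed

lemma comp_bind:
  assumes "length xs = k"
  shows "pf_comp F (map dirac (projs k) @ [G]) xs y = (\<Sum>\<^sub>\<infinity>z\<in>UNIV. G xs z * F (xs @ [z]) y)"
proof -
  let ?gs = "map dirac (projs k) @ [G]"
  have "pf_comp F ?gs xs y = (\<Sum>\<^sub>\<infinity>zs\<in>{zs. length zs = Suc k}.
        F zs y * (if take k zs = xs then G xs (zs!k) else 0))"
  proof -
    have l: "length ?gs = Suc k" by simp
    show ?thesis unfolding pf_comp_def l
      by (rule infsum_cong, subst comp_bind_weight[OF assms]) auto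
  qed
  also have "\<dots> = (\<Sum>\<^sub>\<infinity>zs\<in>(\<lambda>z. xs @ [z]) ` UNIV.
        F zs y * (if take k zs = xs then G xs (zs!k) else 0))"
  proof (rule infsum_cong_neutral)
    fix zs assume "zs \<in> {zs. length zs = Suc k} - range (\<lambda>z. xs @ [z])"
    then have "length zs = Suc k" "zs \<notin> range (\<lambda>z. xs @ [z])" by auto
    moreover have "take k zs = xs \<Longrightarrow> zs = xs @ [zs ! k]"
    proof -
      assume t: "take k zs = xs"
      have "drop k zs = [zs!k]" using \<open>length zs = Suc k\<close>
        by (metis Cons_nth_drop_Suc drop_all lessI order_refl)
      then show ?thesis using t by (metis append_take_drop_id)
    qed
    ultimately show "F zs y * (if take k zs = xs then G xs (zs!k) else 0) = 0" by auto
  qed (use assms in auto)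
  also have "\<dots> = (\<Sum>\<^sub>\<infinity>z\<in>UNIV. G xs z * F (xs @ [z]) y)"
    using assms by (subst infsum_reindex) (auto simp: inj_on_def o_def mult.commute nth_append)
  finally show ?thesis .
qed

lemma PR_fun_proj: "i < n \<Longrightarrow> PR_fun n (\<lambda>xs. xs ! i)"
  unfolding PR_fun_def dirac_def
  using PR_proj[of "Suc i" n] by (intro PR_PR_ext) simp

lemma PR_fun_succ1: "PR_fun 1 (\<lambda>xs. Suc (hd xs))"
  unfolding PR_fun_def dirac_def using PR_succ by (intro PR_PR_ext) simp

lemma PR_fun_comp:
  assumes "PR_fun n f" "length hs = n" "\<forall>h\<in>set hs. PR_fun k h"
  shows "PR_fun k (\<lambda>xs. f (map (\<lambda>h. h xs) hs))"
proof -
  have "PR_ext k (pf_comp (dirac f) (map dirac hs))"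
    using assms by (intro PR_ext_comp) (auto simp: PR_fun_def)
  then show ?thesis unfolding PR_fun_def
    by (rule PR_ext_cong) (auto simp: comp_dirac[OF refl] dirac_def)
qed

lemma prec_dirac:
  "prec (dirac f) (dirac g) xs y = dirac (\<lambda>xs. rec_nat (f xs) (\<lambda>i acc. g (xs @ [i, acc])) y) xs"
proof (induction y)
  case 0 then show ?case by (simp add: dirac_def)
next
  case (Suc y)
  show ?case
  proof (rule ext)
    fix w
    let ?R = "rec_nat (f xs) (\<lambda>i acc. g (xs @ [i, acc])) y"
    have "prec (dirac f) (dirac g) xs (Suc y) w =
      (\<Sum>\<^sub>\<infinity>z\<in>UNIV. dirac (\<lambda>xs. rec_nat (f xs) (\<lambda>i acc. g (xs @ [i, acc])) y) xs z * dirac g (xs @ [y, z]) w)"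
      by (simp add: Suc)
    also have "\<dots> = dirac g (xs @ [y, ?R]) w"
      by (subst infsum_single_supp[of ?R]) (auto simp: dirac_def)
    finally show "prec (dirac f) (dirac g) xs (Suc y) w = dirac (\<lambda>xs. rec_nat (f xs) (\<lambda>i acc. g (xs @ [i, acc])) (Suc y)) xs w"
      by (simp add: dirac_def)
  qed
qed

lemma PR_fun_rec:
  assumes "PR_fun k f" "PR_fun (k+2) g"
  shows "PR_fun (k+1) (\<lambda>xs. rec_nat (f (butlast xs)) (\<lambda>i acc. g (butlast xs @ [i, acc])) (last xs))"
proof -
  have "PR_ext (k+1) (pf_rec (dirac f) (dirac g))"
    using assms by (intro PR_ext_rec) (auto simp: PR_fun_def)
  then show ?thesis unfolding PR_fun_def
    by (rule PR_ext_cong) (simp add: pf_rec_def prec_dirac, simp add: dirac_def)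
qed

lemma mu_dirac:
  "pf_mu (dirac h) xs y = (if h (xs @ [y]) = 0 \<and> (\<forall>z<y. h (xs @ [z]) \<noteq> 0) then 1 else 0)"
proof -
  have s: "(\<Sum>\<^sub>\<infinity>k\<in>{0<..}. dirac h (xs @ [z]) k) = (if h (xs @ [z]) \<noteq> 0 then 1 else 0)" for z
  proof (cases "h (xs @ [z]) = 0")
    case True then show ?thesis by (simp add: dirac_def, intro infsum_0) auto
  next
    case False then show ?thesis
      by (subst infsum_single_supp[of "h (xs @ [z])"]) (auto simp: dirac_def)
  qed
  show ?thesis unfolding pf_mu_def s prod_indicator by (simp add: dirac_def)
qed

lemma PR_ext_mu_dirac:
  assumes "PR_fun (k+1) h"
  shows "PR_ext k (\<lambda>xs y. if h (xs @ [y]) = 0 \<and> (\<forall>z<y. h (xs @ [z]) \<noteq> 0) then 1 else 0)"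
proof -
  have "PR_ext k (pf_mu (dirac h))" using assms by (intro PR_ext_mu) (simp add: PR_fun_def)
  then show ?thesis by (rule PR_ext_cong) (simp add: mu_dirac[abs_def])
qed

lemma PR_fun_mu:
  assumes "PR_fun (k+1) h" "\<And>xs. length xs = k \<Longrightarrow> \<exists>y. h (xs @ [y]) = 0"
  shows "PR_fun k (\<lambda>xs. LEAST y. h (xs @ [y]) = 0)"
  unfolding PR_fun_def
proof (rule PR_ext_cong[OF PR_ext_mu_dirac[OF assms(1)]])
  fix xs :: "nat list" assume "length xs = k"
  then obtain y0 where y0: "h (xs @ [y0]) = 0" using assms(2) by auto
  show "(\<lambda>y. if h (xs @ [y]) = 0 \<and> (\<forall>z<y. h (xs @ [z]) \<noteq> 0) then 1 else 0) =
        dirac (\<lambda>xs. LEAST y. h (xs @ [y]) = 0) xs"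
  proof (rule ext)
    fix y
    have "(h (xs @ [y]) = 0 \<and> (\<forall>z<y. h (xs @ [z]) \<noteq> 0)) \<longleftrightarrow> y = (LEAST y. h (xs @ [y]) = 0)"
    proof
      assume "h (xs @ [y]) = 0 \<and> (\<forall>z<y. h (xs @ [z]) \<noteq> 0)"
      then show "y = (LEAST y. h (xs @ [y]) = 0)"
        by (intro Least_equality[symmetric]) (auto simp: not_less[symmetric])
    next
      assume "y = (LEAST y. h (xs @ [y]) = 0)"
      then show "h (xs @ [y]) = 0 \<and> (\<forall>z<y. h (xs @ [z]) \<noteq> 0)"
        using LeastI[of "\<lambda>y. h (xs @ [y]) = 0", OF y0] not_less_Least by auto
    qed
    then show "(if h (xs @ [y]) = 0 \<and> (\<forall>z<y. h (xs @ [z]) \<noteq> 0) then 1 else 0) =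
        dirac (\<lambda>xs. LEAST y. h (xs @ [y]) = 0) xs y"
      by (simp add: dirac_def)
  qed
qed

text \<open>Variants with the arity given by an equation, convenient with numerals.\<close>
lemma PR_fun_cong': "PR_fun k f \<Longrightarrow> k = k' \<Longrightarrow> (\<And>xs. length xs = k' \<Longrightarrow> f xs = g xs) \<Longrightarrow> PR_fun k' g"
  using PR_fun_cong by blast

lemma PR_fun_mu2:
  assumes "PR_fun m h" "m = Suc k" "\<And>xs. length xs = k \<Longrightarrow> \<exists>y. h (xs @ [y]) = 0"
  shows "PR_fun k (\<lambda>xs. LEAST y. h (xs @ [y]) = 0)"
  using PR_fun_mu[of k h] assms by simp

lemma PR_fun_comp1: "PR_fun 1 f \<Longrightarrow> PR_fun k g \<Longrightarrow> PR_fun k (\<lambda>xs. f [g xs])"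
  using PR_fun_comp[of 1 f "[g]" k] by simp

lemma PR_fun_comp2: "PR_fun 2 f \<Longrightarrow> PR_fun k g \<Longrightarrow> PR_fun k h \<Longrightarrow> PR_fun k (\<lambda>xs. f [g xs, h xs])"
  using PR_fun_comp[of 2 f "[g, h]" k] by simp

lemma PR_fun_projs: "k \<le> m \<Longrightarrow> \<forall>h\<in>set (projs k). PR_fun m h"
  unfolding projs_def by (auto intro: PR_fun_proj)

lemma PR_fun_projs': "h \<in> set (projs k) \<Longrightarrow> k \<le> m \<Longrightarrow> PR_fun m h"
  using PR_fun_projs by blast

lemma PR_fun_lift: "PR_fun k h \<Longrightarrow> k \<le> m \<Longrightarrow> PR_fun m (\<lambda>ys. h (take k ys))"
  using PR_fun_comp[of k h "projs k" m]
  by (auto simp: PR_fun_projs intro: PR_fun_cong simp: map_projs)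

text \<open>Constants of every arity (zero is the least y with y = 0).\<close>
lemma PR_fun_zero: "PR_fun k (\<lambda>xs. 0)"
proof -
  have "PR_fun k (\<lambda>xs. LEAST y. (xs @ [y]) ! k = 0)"
    by (rule PR_fun_mu) (auto intro: PR_fun_proj)
  then show ?thesis by (rule PR_fun_cong) (auto simp: nth_append)
qed

lemma PR_fun_Suc: "PR_fun k g \<Longrightarrow> PR_fun k (\<lambda>xs. Suc (g xs))"
  using PR_fun_comp1[OF PR_fun_succ1] by simp

lemma PR_fun_const: "PR_fun k (\<lambda>xs. c)"
  by (induction c) (auto intro: PR_fun_zero PR_fun_Suc)

lemma rec_nat_add: "rec_nat a (\<lambda>i acc. Suc acc) b = a + b"
  by (induction b) auto

lemma PR_fun_add2: "PR_fun 2 (\<lambda>xs. xs!0 + xs!1)"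
proof -
  have "PR_fun (1+1) (\<lambda>xs. rec_nat ((\<lambda>xs. xs!0) (butlast xs)) (\<lambda>i acc. (\<lambda>ys. Suc (ys!2)) (butlast xs @ [i, acc])) (last xs))"
    by (rule PR_fun_rec) (auto intro!: PR_fun_proj PR_fun_Suc)
  then show ?thesis
    by (rule PR_fun_cong') (auto simp: rec_nat_add length_Suc_conv numeral_2_eq_2)
qed

lemma rec_nat_pred: "rec_nat 0 (\<lambda>i acc. i) b = b - 1"
  by (induction b) auto

lemma PR_fun_pred1: "PR_fun 1 (\<lambda>xs. hd xs - 1)"
proof -
  have "PR_fun (0+1) (\<lambda>xs. rec_nat ((\<lambda>xs. 0) (butlast xs)) (\<lambda>i acc. (\<lambda>ys. ys!0) (butlast xs @ [i, acc])) (last xs))"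
    by (rule PR_fun_rec) (auto intro!: PR_fun_proj PR_fun_const)
  then show ?thesis
    by (rule PR_fun_cong') (auto simp: rec_nat_pred length_Suc_conv)
qed

lemma PR_fun_pred: "PR_fun k f \<Longrightarrow> PR_fun k (\<lambda>xs. f xs - 1)"
  using PR_fun_comp1[OF PR_fun_pred1] by simp

lemma rec_nat_sub: "rec_nat a (\<lambda>i acc. acc - Suc 0) b = a - b"
  by (induction b) auto

lemma PR_fun_sub2: "PR_fun 2 (\<lambda>xs. xs!0 - xs!1)"
proof -
  have "PR_fun (1+1) (\<lambda>xs. rec_nat ((\<lambda>xs. xs!0) (butlast xs)) (\<lambda>i acc. (\<lambda>ys. ys!2 - 1) (butlast xs @ [i, acc])) (last xs))"
    by (rule PR_fun_rec; (intro PR_fun_pred PR_fun_proj)?; simp)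
  then show ?thesis
    by (rule PR_fun_cong') (auto simp: rec_nat_sub length_Suc_conv numeral_2_eq_2)
qed

lemma PR_fun_add: "PR_fun k f \<Longrightarrow> PR_fun k g \<Longrightarrow> PR_fun k (\<lambda>xs. f xs + g xs)"
  using PR_fun_comp2[OF PR_fun_add2] by simp

lemma PR_fun_sub: "PR_fun k f \<Longrightarrow> PR_fun k g \<Longrightarrow> PR_fun k (\<lambda>xs. f xs - g xs)"
  using PR_fun_comp2[OF PR_fun_sub2] by simp

lemma rec_nat_mult: "rec_nat 0 (\<lambda>i acc. acc + a) b = a * b"
  by (induction b) auto

lemma PR_fun_mult2: "PR_fun 2 (\<lambda>xs. xs!0 * xs!1)"
proof -
  have "PR_fun (1+1) (\<lambda>xs. rec_nat ((\<lambda>xs. 0) (butlast xs)) (\<lambda>i acc. (\<lambda>ys. ys!2 + ys!0) (butlast xs @ [i, acc])) (last xs))"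
    by (rule PR_fun_rec) (auto intro!: PR_fun_proj PR_fun_add PR_fun_const)
  then show ?thesis
    by (rule PR_fun_cong') (auto simp: rec_nat_mult length_Suc_conv numeral_2_eq_2)
qed

lemma PR_fun_mult: "PR_fun k f \<Longrightarrow> PR_fun k g \<Longrightarrow> PR_fun k (\<lambda>xs. f xs * g xs)"
  using PR_fun_comp2[OF PR_fun_mult2] by simp

definition PR_pred :: "nat \<Rightarrow> (nat list \<Rightarrow> bool) \<Rightarrow> bool" where
  "PR_pred k P \<longleftrightarrow> PR_fun k (\<lambda>xs. if P xs then 1 else 0)"

lemma PR_pred_eq: "PR_fun k f \<Longrightarrow> PR_fun k g \<Longrightarrow> PR_pred k (\<lambda>xs. f xs = g xs)"
  unfolding PR_pred_def
  by (rule PR_fun_cong[of _ "\<lambda>xs. 1 - ((f xs - g xs) + (g xs - f xs))"]) (auto intro!: PR_fun_sub PR_fun_add PR_fun_const)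

lemma PR_pred_less: "PR_fun k f \<Longrightarrow> PR_fun k g \<Longrightarrow> PR_pred k (\<lambda>xs. f xs < g xs)"
  unfolding PR_pred_def
  by (rule PR_fun_cong[of _ "\<lambda>xs. 1 - (1 - (g xs - f xs))"]) (auto intro!: PR_fun_sub PR_fun_const)

lemma PR_pred_not: "PR_pred k P \<Longrightarrow> PR_pred k (\<lambda>xs. \<not> P xs)"
  unfolding PR_pred_def
  by (rule PR_fun_cong[of _ "\<lambda>xs. 1 - (if P xs then 1 else 0)"]) (auto intro!: PR_fun_sub PR_fun_const)

lemma PR_pred_le: "PR_fun k f \<Longrightarrow> PR_fun k g \<Longrightarrow> PR_pred k (\<lambda>xs. f xs \<le> g xs)"
  using PR_pred_not[OF PR_pred_less[of k g f]] by (simp add: not_less)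

lemma PR_pred_conj: "PR_pred k P \<Longrightarrow> PR_pred k Q \<Longrightarrow> PR_pred k (\<lambda>xs. P xs \<and> Q xs)"
  unfolding PR_pred_def
  by (rule PR_fun_cong[of _ "\<lambda>xs. (if P xs then 1 else 0) * (if Q xs then 1 else 0)"]) (auto intro!: PR_fun_mult)

lemma PR_pred_disj: "PR_pred k P \<Longrightarrow> PR_pred k Q \<Longrightarrow> PR_pred k (\<lambda>xs. P xs \<or> Q xs)"
  using PR_pred_not[OF PR_pred_conj[OF PR_pred_not PR_pred_not, of k P Q]] by simp

lemma PR_fun_if: "PR_pred k P \<Longrightarrow> PR_fun k f \<Longrightarrow> PR_fun k g \<Longrightarrow> PR_fun k (\<lambda>xs. if P xs then f xs else g xs)"
  unfolding PR_pred_def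
  by (rule PR_fun_cong[of _ "\<lambda>xs. (if P xs then 1 else 0) * f xs + (1 - (if P xs then 1 else 0)) * g xs"])
     (auto intro!: PR_fun_mult PR_fun_add PR_fun_sub PR_fun_const)

lemma less_Suc_mult: "b \<noteq> 0 \<Longrightarrow> a < Suc a * (b::nat)"
  by (cases b) auto

text \<open>a div b is the least q with b = 0 or a < (q + 1) b; the bound a makes the search total.\<close>
lemma PR_fun_div2: "PR_fun 2 (\<lambda>xs. xs!0 div xs!1)"
proof -
  let ?h = "\<lambda>ys. if ys!1 = 0 \<or> ys!0 < Suc (ys!2) * ys!1 then 0 else (1::nat)"
  have "PR_fun 2 (\<lambda>xs. LEAST q. ?h (xs @ [q]) = 0)"
  proof (rule PR_fun_mu2[where m=3 and k=2])
    show "PR_fun 3 ?h"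
      by (intro PR_fun_if PR_pred_disj PR_pred_eq PR_pred_less PR_fun_mult PR_fun_Suc PR_fun_proj PR_fun_const) auto
    fix xs :: "nat list" assume "length xs = 2"
    then show "\<exists>y. ?h (xs @ [y]) = 0"
      using less_Suc_mult[of "xs!1" "xs!0"] by (intro exI[of _ "xs!0"]) (auto simp: nth_append)
  qed simp
  then show ?thesis
  proof (rule PR_fun_cong)
    fix xs :: "nat list" assume l: "length xs = 2"
    let ?a = "xs!0" and ?b = "xs!1"
    have e: "?h (xs @ [q]) = 0 \<longleftrightarrow> ?b = 0 \<or> ?a < Suc q * ?b" for q
      using l by (auto simp: nth_append)
    have "(LEAST q. ?b = 0 \<or> ?a < Suc q * ?b) = ?a div ?b"
    proof (rule Least_equality)
      show "?b = 0 \<or> ?a < Suc (?a div ?b) * ?b"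
        by (metis add.commute div_mult_mod_eq mod_less_divisor mult_Suc nat_add_left_cancel_less
             neq0_conv)
      fix y assume "?b = 0 \<or> ?a < Suc y * ?b"
      then show "?a div ?b \<le> y"
        by (metis div_le_mono div_mult_self1_is_m less_Suc_eq_le less_mult_imp_div_less
             zero_less_iff_neq_zero div_by_0 le0)
    qed
    then show "(LEAST q. ?h (xs @ [q]) = 0) = ?a div ?b" by (simp only: e)
  qed
qed

lemma PR_fun_div: "PR_fun k f \<Longrightarrow> PR_fun k g \<Longrightarrow> PR_fun k (\<lambda>xs. f xs div g xs)"
  using PR_fun_comp2[OF PR_fun_div2] by simp

lemma PR_fun_mod:
  assumes "PR_fun k f" "PR_fun k g"
  shows "PR_fun k (\<lambda>xs. f xs mod g xs)"
proof -
  have "PR_fun k (\<lambda>xs. f xs - (f xs div g xs) * g xs)"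
    by (intro PR_fun_sub PR_fun_mult PR_fun_div assms)
  then show ?thesis by (rule PR_fun_cong) (simp add: minus_div_mult_eq_mod)
qed

lemma rec_nat_pow: "rec_nat (Suc 0) (\<lambda>i acc. acc + acc) b = 2 ^ b"
  by (induction b) auto

lemma PR_fun_pow2_1: "PR_fun 1 (\<lambda>xs. 2 ^ hd xs)"
proof -
  have "PR_fun (0+1) (\<lambda>xs. rec_nat ((\<lambda>xs. 1) (butlast xs)) (\<lambda>i acc. (\<lambda>ys. ys!1 + ys!1) (butlast xs @ [i, acc])) (last xs))"
    by (rule PR_fun_rec) (auto intro!: PR_fun_proj PR_fun_const PR_fun_add)
  then show ?thesis
    by (rule PR_fun_cong') (auto simp: rec_nat_pow length_Suc_conv)
qed

lemma PR_fun_pow2: "PR_fun k f \<Longrightarrow> PR_fun k (\<lambda>xs. 2 ^ f xs)"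
  using PR_fun_comp1[OF PR_fun_pow2_1] by simp

lemma PR_fun_rec_nat:
  assumes "PR_fun k f" "PR_fun (k+2) g" "PR_fun k n"
  shows "PR_fun k (\<lambda>xs. rec_nat (f xs) (\<lambda>i acc. g (xs @ [i, acc])) (n xs))"
proof -
  have r: "PR_fun (k+1) (\<lambda>xs. rec_nat (f (butlast xs)) (\<lambda>i acc. g (butlast xs @ [i, acc])) (last xs))"
    by (rule PR_fun_rec[OF assms(1,2)])
  have "PR_fun k (\<lambda>xs. (\<lambda>xs. rec_nat (f (butlast xs)) (\<lambda>i acc. g (butlast xs @ [i, acc])) (last xs))
           (map (\<lambda>h. h xs) (projs k @ [n])))"
    using assms by (intro PR_fun_comp[OF r]) (auto intro: PR_fun_projs')
  then show ?thesis by (rule PR_fun_cong) (simp add: map_projs)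
qed

lemma PR_fun_iter:
  assumes "PR_fun k f" "PR_fun (k+1) s" "PR_fun k n"
  shows "PR_fun k (\<lambda>xs. ((\<lambda>acc. s (xs @ [acc])) ^^ n xs) (f xs))"
proof -
  have g: "PR_fun (k+2) (\<lambda>ys. s (take k ys @ [ys ! (k+1)]))"
  proof -
    have "PR_fun (k+2) (\<lambda>ys. s (map (\<lambda>h. h ys) (projs k @ [\<lambda>ys. ys ! (k+1)])))"
      using assms by (intro PR_fun_comp[OF assms(2)]) (auto intro: PR_fun_projs' PR_fun_proj)
    then show ?thesis by (rule PR_fun_cong) (simp add: map_projs)
  qed
  have nf: "rec_nat a (\<lambda>i acc. s (xs @ [acc])) m = ((\<lambda>acc. s (xs @ [acc])) ^^ m) a" for a m xs
    by (induction m) auto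
  have "PR_fun k (\<lambda>xs. rec_nat (f xs) (\<lambda>i acc. (\<lambda>ys. s (take k ys @ [ys ! (k+1)])) (xs @ [i, acc])) (n xs))"
    using assms(1) g assms(3) by (rule PR_fun_rec_nat)
  then show ?thesis
  proof (rule PR_fun_cong)
    fix xs :: "nat list" assume "length xs = k"
    then have "rec_nat (f xs) (\<lambda>i acc. (\<lambda>ys. s (take k ys @ [ys ! (k+1)])) (xs @ [i, acc])) (n xs)
       = rec_nat (f xs) (\<lambda>i acc. s (xs @ [acc])) (n xs)" by (simp add: nth_append)
    then show "rec_nat (f xs) (\<lambda>i acc. (\<lambda>ys. s (take k ys @ [ys ! (k+1)])) (xs @ [i, acc])) (n xs) =
         ((\<lambda>acc. s (xs @ [acc])) ^^ n xs) (f xs)" by (simp only: nf)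
  qed
qed

text \<open>The pairing \<open>prod_encode\<close> of the library is recursive, and so are its inverses:
  the second component is found through the triangular root, a bounded minimization.\<close>
lemma PR_fun_tri: "PR_fun k f \<Longrightarrow> PR_fun k (\<lambda>xs. triangle (f xs))"
  unfolding triangle_def by (intro PR_fun_div PR_fun_mult PR_fun_Suc PR_fun_const)

lemma PR_fun_enc: "PR_fun k f \<Longrightarrow> PR_fun k g \<Longrightarrow> PR_fun k (\<lambda>xs. prod_encode (f xs, g xs))"
  unfolding prod_encode_def by (auto intro!: PR_fun_add PR_fun_tri)

definition tri_root :: "nat \<Rightarrow> nat" where
  "tri_root n = (LEAST s. n < triangle (Suc s))"

lemma triangle_ge: "n < triangle (Suc n)"
  by (induction n) auto

lemma tri_root_props: "triangle (tri_root n) \<le> n" "n < triangle (Suc (tri_root n))"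
proof -
  show "n < triangle (Suc (tri_root n))" unfolding tri_root_def
    by (rule LeastI[of _ n]) (rule triangle_ge)
  show "triangle (tri_root n) \<le> n"
  proof (cases "tri_root n")
    case 0 then show ?thesis by simp
  next
    case (Suc s)
    then have "\<not> n < triangle (Suc s)" unfolding tri_root_def
      by (metis lessI not_less_Least)
    then show ?thesis using Suc by simp
  qed
qed

lemma prod_decode_tri: "prod_decode n = (n - triangle (tri_root n), tri_root n - (n - triangle (tri_root n)))"
proof -
  let ?s = "tri_root n" let ?m = "n - triangle ?s"
  have n: "n = triangle ?s + ?m" using tri_root_props(1)[of n] by simp
  have "?m \<le> ?s" using tri_root_props[of n] by simp
  then have "prod_decode (triangle ?s + ?m) = (?m, ?s - ?m)"
    by (simp add: prod_decode_triangle_add prod_decode_aux.simps)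
  then show ?thesis using n by metis
qed

lemma PR_fun_tri_root1: "PR_fun 1 (\<lambda>xs. tri_root (hd xs))"
proof -
  let ?h = "\<lambda>ys. if ys!0 < triangle (Suc (ys!1)) then 0 else (1::nat)"
  have "PR_fun 1 (\<lambda>xs. LEAST q. ?h (xs @ [q]) = 0)"
  proof (rule PR_fun_mu2[where m=2 and k=1])
    show "PR_fun 2 ?h"
      by (intro PR_fun_if PR_pred_less PR_fun_tri PR_fun_Suc PR_fun_proj PR_fun_const) auto
    fix xs :: "nat list" assume "length xs = 1"
    then show "\<exists>y. ?h (xs @ [y]) = 0"
      using triangle_ge by (intro exI[of _ "xs!0"]) (auto simp: nth_append)
  qed simp
  then show ?thesis
    by (rule PR_fun_cong) (auto simp: tri_root_def length_Suc_conv)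
qed

lemma PR_fun_fst: "PR_fun k f \<Longrightarrow> PR_fun k (\<lambda>xs. fst (prod_decode (f xs)))"
  unfolding prod_decode_tri fst_conv
  by (intro PR_fun_sub PR_fun_tri PR_fun_comp1[OF PR_fun_tri_root1, simplified])

lemma PR_fun_snd: "PR_fun k f \<Longrightarrow> PR_fun k (\<lambda>xs. snd (prod_decode (f xs)))"
  unfolding prod_decode_tri snd_conv
  by (intro PR_fun_sub PR_fun_tri PR_fun_comp1[OF PR_fun_tri_root1, simplified])

definition quad :: "nat \<Rightarrow> nat \<Rightarrow> nat \<Rightarrow> nat \<Rightarrow> nat" where
  "quad a b c d = prod_encode (a, prod_encode (b, prod_encode (c, d)))"
definition p1 :: "nat \<Rightarrow> nat" where "p1 S = fst (prod_decode S)"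
definition p2 :: "nat \<Rightarrow> nat" where "p2 S = fst (prod_decode (snd (prod_decode S)))"
definition p3 :: "nat \<Rightarrow> nat" where "p3 S = fst (prod_decode (snd (prod_decode (snd (prod_decode S)))))"
definition p4 :: "nat \<Rightarrow> nat" where "p4 S = snd (prod_decode (snd (prod_decode (snd (prod_decode S)))))"

lemma p_quad[simp]: "p1 (quad a b c d) = a" "p2 (quad a b c d) = b" "p3 (quad a b c d) = c" "p4 (quad a b c d) = d"
  by (auto simp: quad_def p1_def p2_def p3_def p4_def)

lemma PR_fun_quad: "PR_fun k a \<Longrightarrow> PR_fun k b \<Longrightarrow> PR_fun k c \<Longrightarrow> PR_fun k d \<Longrightarrow> PR_fun k (\<lambda>xs. quad (a xs) (b xs) (c xs) (d xs))"
  unfolding quad_def by (intro PR_fun_enc)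
lemma PR_fun_p1: "PR_fun k f \<Longrightarrow> PR_fun k (\<lambda>xs. p1 (f xs))" unfolding p1_def by (intro PR_fun_fst)
lemma PR_fun_p2: "PR_fun k f \<Longrightarrow> PR_fun k (\<lambda>xs. p2 (f xs))" unfolding p2_def by (intro PR_fun_fst PR_fun_snd)
lemma PR_fun_p3: "PR_fun k f \<Longrightarrow> PR_fun k (\<lambda>xs. p3 (f xs))" unfolding p3_def by (intro PR_fun_fst PR_fun_snd)
lemma PR_fun_p4: "PR_fun k f \<Longrightarrow> PR_fun k (\<lambda>xs. p4 (f xs))" unfolding p4_def by (intro PR_fun_snd)

lemma PR_fun_iter2:
  assumes "PR_fun (Suc k) (\<lambda>ys. st (ys ! k))" "PR_fun k f" "PR_fun k n"
  shows "PR_fun k (\<lambda>xs. (st ^^ n xs) (f xs))"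
proof -
  have "PR_fun k (\<lambda>xs. ((\<lambda>acc. (\<lambda>ys. st (ys ! k)) (xs @ [acc])) ^^ n xs) (f xs))"
    using assms by (intro PR_fun_iter) auto
  then show ?thesis
  proof (rule PR_fun_cong)
    fix xs :: "nat list" assume "length xs = k"
    then have "(\<lambda>acc. (\<lambda>ys. st (ys ! k)) (xs @ [acc])) = st" by (auto simp: nth_append)
    then show "((\<lambda>acc. (\<lambda>ys. st (ys ! k)) (xs @ [acc])) ^^ n xs) (f xs) = (st ^^ n xs) (f xs)" by simp
  qed
qed

lemma PR_fun_foldr:
  assumes F: "\<And>a b. PR_fun k a \<Longrightarrow> PR_fun k b \<Longrightarrow> PR_fun k (\<lambda>xs. F (a xs) (b xs))"
  shows "PR_fun k (\<lambda>xs. foldr F xs c)"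
proof -
  have "j \<le> k \<Longrightarrow> PR_fun k (\<lambda>xs. foldr F (drop (k - j) xs) c)" for j
  proof (induction j)
    case 0
    show ?case by (rule PR_fun_cong[OF PR_fun_const[of k c]]) simp
  next
    case (Suc j)
    have "PR_fun k (\<lambda>xs. F (xs ! (k - Suc j)) (foldr F (drop (k - j) xs) c))"
      using Suc by (intro F PR_fun_proj) auto
    then show ?case
    proof (rule PR_fun_cong)
      fix xs :: "nat list" assume l: "length xs = k"
      have "drop (k - Suc j) xs = xs ! (k - Suc j) # drop (Suc (k - Suc j)) xs"
        using l Suc.prems by (intro Cons_nth_drop_Suc[symmetric]) auto
      moreover have "Suc (k - Suc j) = k - j" using Suc.prems by simp
      ultimately show "F (xs ! (k - Suc j)) (foldr F (drop (k - j) xs) c) = foldr F (drop (k - Suc j) xs) c"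
        by simp
    qed
  qed
  from this[of k] show ?thesis by simp
qed

section \<open>Lists and tapes coded as numbers\<close>

definition ncons :: "nat \<Rightarrow> nat \<Rightarrow> nat" where "ncons h t = Suc (prod_encode (h, t))"
definition nhd :: "nat \<Rightarrow> nat" where "nhd n = fst (prod_decode (n - 1))"
definition ntl :: "nat \<Rightarrow> nat" where "ntl n = snd (prod_decode (n - 1))"

lemma prod_decode_0[simp]: "prod_decode 0 = (0, 0)"
  by (simp add: prod_decode_def prod_decode_aux.simps)

lemma nhd_ncons[simp]: "nhd (ncons h t) = h" and ntl_ncons[simp]: "ntl (ncons h t) = t"
  and nhd_0[simp]: "nhd 0 = 0" and ntl_0[simp]: "ntl 0 = 0"
  and ncons_nz[simp]: "ncons h t \<noteq> 0"
  by (auto simp: nhd_def ntl_def ncons_def)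

primrec list_code :: "nat list \<Rightarrow> nat" where
  "list_code [] = 0" | "list_code (x # xs) = ncons x (list_code xs)"

text \<open>A code bounds the length of the coded list; this bounds decoding loops.\<close>
lemma list_code_ge: "length l \<le> list_code l"
proof (induction l)
  case (Cons x l)
  have "list_code l \<le> prod_encode (x, list_code l)" by (rule le_prod_encode_2)
  then show ?case using Cons by (simp add: ncons_def)
qed simp

fun sym_code :: "sym \<Rightarrow> nat" where "sym_code None = 0" | "sym_code (Some a) = Suc a"
fun sym_decode :: "nat \<Rightarrow> sym" where "sym_decode 0 = None" | "sym_decode (Suc a) = Some a"
lemma sym_decode_sym_code[simp]: "sym_decode (sym_code a) = a" by (cases a) auto

definition tape_code :: "sym list \<Rightarrow> nat" where "tape_code l = list_code (map sym_code l)"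

lemma tape_code_simps[simp]: "tape_code [] = 0" "tape_code (x # l) = ncons (sym_code x) (tape_code l)"
  by (auto simp: tape_code_def)

lemma tape_code_0_iff[simp]: "tape_code l = 0 \<longleftrightarrow> l = []"
  by (cases l) auto

text \<open>A configuration (s, a, t, q) is coded by the quadruple of rev s, a, t and q, so
  that the cells next to the head are at the front of both tape halves.\<close>
definition cfg_code :: "nat \<Rightarrow> nat \<Rightarrow> nat \<Rightarrow> nat \<Rightarrow> nat" where
  "cfg_code sr a t q = prod_encode (prod_encode (sr, a), prod_encode (t, q))"
definition c_sr :: "nat \<Rightarrow> nat" where "c_sr c = fst (prod_decode (fst (prod_decode c)))"
definition c_a :: "nat \<Rightarrow> nat" where "c_a c = snd (prod_decode (fst (prod_decode c)))"
definition c_t :: "nat \<Rightarrow> nat" where "c_t c = fst (prod_decode (snd (prod_decode c)))"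
definition c_q :: "nat \<Rightarrow> nat" where "c_q c = snd (prod_decode (snd (prod_decode c)))"

lemma cfg_code_sel[simp]: "c_sr (cfg_code sr a t q) = sr" "c_a (cfg_code sr a t q) = a" "c_t (cfg_code sr a t q) = t"
  "c_q (cfg_code sr a t q) = q"
  by (auto simp: cfg_code_def c_sr_def c_a_def c_t_def c_q_def)

definition config_code :: "config \<Rightarrow> nat" where
  "config_code cfg = (case cfg of (s, a, t, q) \<Rightarrow> cfg_code (tape_code (rev s)) (sym_code a) (tape_code t) q)"

definition tape_syms :: "ptm \<Rightarrow> sym set" where "tape_syms M = insert None (Some ` alphabet M)"

fun move_code :: "move \<Rightarrow> nat" where
  "move_code MLeft = 0" | "move_code MRight = 1" | "move_code MStay = 2"

text \<open>Only
  the finitely many keys of nonfinal states and tape symbols matter; outside of them the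
  tables return 0, so each table is a finitely supported function of the key.\<close>
definition trans_keys :: "ptm \<Rightarrow> nat set" where
  "trans_keys M = (\<lambda>(b, q, a). prod_encode (b, prod_encode (q, sym_code a))) ` ({0, 1} \<times> (states M - finals M) \<times> tape_syms M)"

definition trans_lookup :: "ptm \<Rightarrow> nat \<Rightarrow> nat \<times> sym \<times> move" where
  "trans_lookup M n = (if fst (prod_decode n) = 1 then delta1 M else delta0 M)
      (fst (prod_decode (snd (prod_decode n)))) (sym_decode (snd (prod_decode (snd (prod_decode n)))))"

definition trans_state :: "ptm \<Rightarrow> nat \<Rightarrow> nat" where "trans_state M n = (if n \<in> trans_keys M then fst (trans_lookup M n) else 0)"
definition trans_sym :: "ptm \<Rightarrow> nat \<Rightarrow> nat" where "trans_sym M n = (if n \<in> trans_keys M then sym_code (fst (snd (trans_lookup M n))) else 0)"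
definition trans_move :: "ptm \<Rightarrow> nat \<Rightarrow> nat" where "trans_move M n = (if n \<in> trans_keys M then move_code (snd (snd (trans_lookup M n))) else 0)"
definition final_flag :: "ptm \<Rightarrow> nat \<Rightarrow> nat" where "final_flag M q = (if q \<in> finals M then 1 else 0)"

definition trans_key :: "nat \<Rightarrow> nat \<Rightarrow> nat" where "trans_key b c = prod_encode (b, prod_encode (c_q c, c_a c))"

definition step_code :: "ptm \<Rightarrow> nat \<Rightarrow> nat \<Rightarrow> nat" where
  "step_code M b c = (if final_flag M (c_q c) = 1 then c else
     (if trans_move M (trans_key b c) = 2 then cfg_code (c_sr c) (trans_sym M (trans_key b c)) (c_t c) (trans_state M (trans_key b c))
      else if trans_move M (trans_key b c) = 1 then
        cfg_code (ncons (trans_sym M (trans_key b c)) (c_sr c)) (nhd (c_t c)) (ntl (c_t c)) (trans_state M (trans_key b c))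
      else if c_sr c = 0 then cfg_code 0 0 (ncons (trans_sym M (trans_key b c)) (c_t c)) (trans_state M (trans_key b c))
      else cfg_code (ntl (c_sr c)) (nhd (c_sr c)) (ncons (trans_sym M (trans_key b c)) (c_t c)) (trans_state M (trans_key b c))))"

definition config_ok :: "ptm \<Rightarrow> config \<Rightarrow> bool" where
  "config_ok M cfg = (case cfg of (s, a, t, q) \<Rightarrow> q \<in> states M \<and> set s \<subseteq> tape_syms M \<and> a \<in> tape_syms M \<and> set t \<subseteq> tape_syms M)"

lemma rev_nonempty: "s \<noteq> [] \<Longrightarrow> rev s = last s # rev (butlast s)"
  by (metis append_butlast_last_id rev_eq_Cons_iff rev_rev_ident)

lemma trans_tables:
  assumes wf: "wf_ptm M" and q: "q \<in> states M - finals M" and a: "a \<in> tape_syms M"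
    and d: "(if b then delta1 M else delta0 M) q a = (q', a', m)"
  defines "key \<equiv> prod_encode (if b then 1 else 0, prod_encode (q, sym_code a))"
  shows "trans_state M key = q'" "trans_sym M key = sym_code a'" "trans_move M key = move_code m"
    and "q' \<in> states M" "a' \<in> tape_syms M"
proof -
  have "key \<in> trans_keys M" unfolding key_def trans_keys_def using q a
    by (intro image_eqI[of _ _ "(if b then 1 else 0, q, a)"]) auto
  moreover have "trans_lookup M key = (q', a', m)" unfolding key_def trans_lookup_def using d by (cases b) auto
  ultimately show "trans_state M key = q'" "trans_sym M key = sym_code a'" "trans_move M key = move_code m"
    by (auto simp: trans_state_def trans_sym_def trans_move_def)
  have "delta0 M q a \<in> states M \<times> tape_syms M \<times> UNIV \<and> delta1 M q a \<in> states M \<times> tape_syms M \<times> UNIV"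
    using wf q a unfolding wf_ptm_def tape_syms_def by blast
  then show "q' \<in> states M" "a' \<in> tape_syms M" using d by (cases b; auto)+
qed

lemma step_correct:
  assumes wf: "wf_ptm M" and I: "config_ok M cfg"
  shows "step_code M (if b then 1 else 0) (config_code cfg) = config_code (step M b cfg) \<and> config_ok M (step M b cfg)"
proof -
  obtain s a t q where cfg: "cfg = (s, a, t, q)" by (cases cfg) auto
  have I': "q \<in> states M" "set s \<subseteq> tape_syms M" "a \<in> tape_syms M" "set t \<subseteq> tape_syms M"
    using I by (auto simp: config_ok_def cfg)
  show ?thesis
  proof (cases "q \<in> finals M")
    case True
    then show ?thesis using I by (simp add: cfg step_code_def config_code_def final_flag_def)
  next
    case False
    obtain q' a' m where d: "(if b then delta1 M else delta0 M) q a = (q', a', m)"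
      by (metis prod_cases3)
    have key: "trans_key (if b then 1 else 0) (config_code cfg) = prod_encode (if b then 1 else 0, prod_encode (q, sym_code a))"
      by (simp add: trans_key_def config_code_def cfg)
    have q: "q \<in> states M - finals M" using False I' by simp
    note tv = trans_tables[OF wf q I'(3) d, folded key]
    have st: "step M b cfg = apply_move s a' t q' m"
      using False d by (simp add: cfg)
    have nf: "final_flag M (c_q (config_code cfg)) \<noteq> 1" using False by (simp add: final_flag_def config_code_def cfg)
    show ?thesis
    proof (cases m)
      case MStay
      then show ?thesis using nf tv st False I'
        by (simp add: step_code_def config_code_def cfg config_ok_def)
    next
      case MRight
      then show ?thesis using nf tv st False I'
        by (cases t) (auto simp: step_code_def config_code_def cfg config_ok_def tape_syms_def)
    next
      case MLeft
      show ?thesis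
      proof (cases "s = []")
        case True
        then show ?thesis using MLeft nf tv st False I'
          by (simp add: step_code_def config_code_def cfg config_ok_def tape_syms_def)
      next
        case s: False
        have r: "tape_code (rev s) = ncons (sym_code (last s)) (tape_code (rev (butlast s)))"
          by (simp only: rev_nonempty[OF s] tape_code_simps)
        have "last s \<in> tape_syms M" "set (butlast s) \<subseteq> tape_syms M" using I' s
          by (auto dest: in_set_butlastD)
        then show ?thesis using MLeft nf tv st False I' s r
          by (simp add: step_code_def config_code_def cfg config_ok_def)
      qed
    qed
  qed
qed

text \<open>Every finitely supported function is recursive: it is a finite sum of
  case distinctions.  This covers the transition tables of a machine.\<close>
lemma PR_fun_finsupp_aux:
  assumes "finite S" "PR_fun k g"
  shows "PR_fun k (\<lambda>xs. \<Sum>c\<in>S. (if g xs = c then f c else 0))"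
  using assms(1)
proof (induction S)
  case empty then show ?case by (simp add: PR_fun_const)
next
  case (insert c S)
  show ?case unfolding sum.insert[OF insert.hyps]
    by (intro PR_fun_add PR_fun_if PR_pred_eq assms(2) PR_fun_const insert.IH)
qed

lemma PR_fun_finsupp:
  assumes "finite S" "\<And>n. n \<notin> S \<Longrightarrow> f n = 0" "PR_fun k g"
  shows "PR_fun k (\<lambda>xs. f (g xs))"
proof -
  have "(\<Sum>c\<in>S. (if n = c then f c else 0)) = f n" for n
    using assms(1,2) by (cases "n \<in> S") (auto simp: sum.delta)
  then show ?thesis using PR_fun_finsupp_aux[OF assms(1,3), of f] by simp
qed

lemma finite_tape_syms: "wf_ptm M \<Longrightarrow> finite (tape_syms M)"
  by (simp add: wf_ptm_def tape_syms_def)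

lemma finite_trans_keys: "wf_ptm M \<Longrightarrow> finite (trans_keys M)"
  unfolding trans_keys_def using finite_tape_syms[of M]
  by (intro finite_imageI finite_cartesian_product) (auto simp: wf_ptm_def)

lemma PR_fun_trans_state: "wf_ptm M \<Longrightarrow> PR_fun k g \<Longrightarrow> PR_fun k (\<lambda>xs. trans_state M (g xs))"
  by (rule PR_fun_finsupp[OF finite_trans_keys]) (auto simp: trans_state_def)
lemma PR_fun_trans_sym: "wf_ptm M \<Longrightarrow> PR_fun k g \<Longrightarrow> PR_fun k (\<lambda>xs. trans_sym M (g xs))"
  by (rule PR_fun_finsupp[OF finite_trans_keys]) (auto simp: trans_sym_def)
lemma PR_fun_trans_move: "wf_ptm M \<Longrightarrow> PR_fun k g \<Longrightarrow> PR_fun k (\<lambda>xs. trans_move M (g xs))"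
  by (rule PR_fun_finsupp[OF finite_trans_keys]) (auto simp: trans_move_def)
lemma PR_fun_final_flag: "wf_ptm M \<Longrightarrow> PR_fun k g \<Longrightarrow> PR_fun k (\<lambda>xs. final_flag M (g xs))"
  by (rule PR_fun_finsupp[of "finals M"]) (auto simp: final_flag_def wf_ptm_def intro: finite_subset)

lemma PR_fun_ncons: "PR_fun k f \<Longrightarrow> PR_fun k g \<Longrightarrow> PR_fun k (\<lambda>xs. ncons (f xs) (g xs))"
  unfolding ncons_def by (intro PR_fun_Suc PR_fun_enc)
lemma PR_fun_nhd: "PR_fun k f \<Longrightarrow> PR_fun k (\<lambda>xs. nhd (f xs))"
  unfolding nhd_def by (intro PR_fun_fst PR_fun_pred)
lemma PR_fun_ntl: "PR_fun k f \<Longrightarrow> PR_fun k (\<lambda>xs. ntl (f xs))"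
  unfolding ntl_def by (intro PR_fun_snd PR_fun_pred)
lemma PR_fun_cfg_code: "PR_fun k a \<Longrightarrow> PR_fun k b \<Longrightarrow> PR_fun k c \<Longrightarrow> PR_fun k d \<Longrightarrow> PR_fun k (\<lambda>xs. cfg_code (a xs) (b xs) (c xs) (d xs))"
  unfolding cfg_code_def by (intro PR_fun_enc)
lemma PR_fun_c_sr: "PR_fun k f \<Longrightarrow> PR_fun k (\<lambda>xs. c_sr (f xs))" unfolding c_sr_def by (intro PR_fun_fst)
lemma PR_fun_c_a: "PR_fun k f \<Longrightarrow> PR_fun k (\<lambda>xs. c_a (f xs))" unfolding c_a_def by (intro PR_fun_fst PR_fun_snd)
lemma PR_fun_c_t: "PR_fun k f \<Longrightarrow> PR_fun k (\<lambda>xs. c_t (f xs))" unfolding c_t_def by (intro PR_fun_fst PR_fun_snd)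
lemma PR_fun_c_q: "PR_fun k f \<Longrightarrow> PR_fun k (\<lambda>xs. c_q (f xs))" unfolding c_q_def by (intro PR_fun_snd)
lemma PR_fun_trans_key: "PR_fun k f \<Longrightarrow> PR_fun k g \<Longrightarrow> PR_fun k (\<lambda>xs. trans_key (f xs) (g xs))"
  unfolding trans_key_def by (intro PR_fun_enc PR_fun_c_q PR_fun_c_a)

lemma PR_fun_step_code: "wf_ptm M \<Longrightarrow> PR_fun k f \<Longrightarrow> PR_fun k g \<Longrightarrow> PR_fun k (\<lambda>xs. step_code M (f xs) (g xs))"
  unfolding step_code_def
  by (intro PR_fun_if PR_pred_eq PR_fun_final_flag PR_fun_c_q PR_fun_trans_move PR_fun_trans_key PR_fun_cfg_code PR_fun_c_sr PR_fun_c_t PR_fun_trans_sym PR_fun_trans_state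
        PR_fun_ncons PR_fun_nhd PR_fun_ntl PR_fun_const; assumption)

section \<open>Enumerating the choice sequences\<close>

text \<open>For m \<ge> 1, choices_of m lists the binary digits of m below its leading 1, least
  significant first.  This is a bijection from the positive numbers onto bool lists, with
  inverse choice_index.\<close>
fun choices_of :: "nat \<Rightarrow> bool list" where
  "choices_of n = (if n \<le> 1 then [] else odd n # choices_of (n div 2))"

declare choices_of.simps[simp del]

lemma length_choices_of: "1 \<le> m \<Longrightarrow> length (choices_of m) < m"
proof (induction m rule: choices_of.induct)
  case (1 n)
  show ?case
  proof (cases "n \<le> 1")
    case True then show ?thesis using 1 by (simp add: choices_of.simps)
  next
    case False
    then have "length (choices_of (n div 2)) < n div 2" using 1 by auto
    then show ?thesis using False by (subst choices_of.simps) simp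
  qed
qed

primrec choice_index :: "bool list \<Rightarrow> nat" where
  "choice_index [] = 1" | "choice_index (b # l) = 2 * choice_index l + (if b then 1 else 0)"

lemma choice_index_pos: "1 \<le> choice_index l" by (induction l) auto

lemma choices_of_choice_index: "choices_of (choice_index l) = l"
proof (induction l)
  case Nil then show ?case by (simp add: choices_of.simps)
next
  case (Cons b l)
  have "1 \<le> choice_index l" by (rule choice_index_pos)
  then have "\<not> choice_index (b # l) \<le> 1" by auto
  moreover have "choice_index (b # l) div 2 = choice_index l" by auto
  moreover have "odd (choice_index (b # l)) = b" by auto
  ultimately show ?case using Cons by (subst choices_of.simps) simp
qed

lemma choice_index_choices_of: "1 \<le> m \<Longrightarrow> choice_index (choices_of m) = m"
proof (induction m rule: choices_of.induct)
  case (1 n)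
  show ?case
  proof (cases "n \<le> 1")
    case True then show ?thesis using 1 by (simp add: choices_of.simps)
  next
    case False
    then have IH: "choice_index (choices_of (n div 2)) = n div 2" using 1 by auto
    have c: "choices_of n = odd n # choices_of (n div 2)" using False by (subst choices_of.simps) simp
    show ?thesis unfolding c using IH by (cases "even n") auto
  qed
qed

definition choice_seq :: "nat \<Rightarrow> bool list" where "choice_seq z = choices_of (Suc z)"

lemma inj_choice_seq: "inj choice_seq"
proof (rule injI)
  fix x y assume "choice_seq x = choice_seq y"
  then have "choice_index (choices_of (Suc x)) = choice_index (choices_of (Suc y))" by (simp add: choice_seq_def)
  then show "x = y" by (simp add: choice_index_choices_of)
qed

lemma choice_seq_surj: "choice_seq (choice_index l - 1) = l"
  using choice_index_pos[of l] by (simp add: choice_seq_def choices_of_choice_index)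

lemma length_choice_seq: "length (choice_seq z) \<le> z"
  using length_choices_of[of "Suc z"] by (simp add: choice_seq_def)

text \<open>The simulation state is a quadruple (configuration code, m, bad, L): the remaining
  choices are choices_of m, bad counts the steps taken from a final configuration (such
  runs do not count as halting after exactly their length), and L counts the steps.\<close>
definition sim_step :: "ptm \<Rightarrow> nat \<Rightarrow> nat" where
  "sim_step M S = (if p2 S \<le> 1 then S else
     quad (step_code M (p2 S mod 2) (p1 S)) (p2 S div 2) (p3 S + final_flag M (c_q (p1 S))) (Suc (p4 S)))"

lemma run_Cons: "run M (b # bs) c = run M bs (step M b c)"
  by (simp add: run_def)

lemma run_Nil: "run M [] c = c" by (simp add: run_def)

lemma final_flag_config_code: "final_flag M (c_q (config_code cfg)) = (if is_final M cfg then 1 else 0)"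
  by (cases cfg) (auto simp: final_flag_def config_code_def is_final_def)

lemma funpow_fix: "f x = x \<Longrightarrow> (f ^^ n) x = x"
  by (induction n) auto

lemma sim_step_consume:
  assumes wf: "wf_ptm M" and ok: "config_ok M cfg" and m: "\<not> m \<le> 1"
  shows "sim_step M (quad (config_code cfg) m bad L) =
    quad (config_code (step M (odd m) cfg)) (m div 2) (bad + (if is_final M cfg then 1 else 0)) (Suc L)"
proof -
  have "m mod 2 = (if odd m then 1 else 0)" by (simp add: odd_iff_mod_2_eq_one)
  then have "step_code M (m mod 2) (config_code cfg) = config_code (step M (odd m) cfg)"
    using step_correct[OF wf ok, of "odd m"] by auto
  then show ?thesis using m by (simp add: sim_step_def final_flag_config_code)
qed

lemma never_final_Cons:
  "(\<forall>i<length (b # bs). \<not> is_final M (run M (take i (b # bs)) c)) \<longleftrightarrow>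
     \<not> is_final M c \<and> (\<forall>i<length bs. \<not> is_final M (run M (take i bs) (step M b c)))"
proof -
  have "(\<forall>i<length (b # bs). P i) \<longleftrightarrow> P 0 \<and> (\<forall>i<length bs. P (Suc i))" for P
    by (simp add: All_less_Suc2)
  then show ?thesis by (simp add: run_Cons run_Nil)
qed

lemma sim_correct:
  assumes wf: "wf_ptm M"
  shows "config_ok M cfg \<Longrightarrow> 1 \<le> m \<Longrightarrow> length (choices_of m) \<le> n \<Longrightarrow>
    \<exists>b'. (sim_step M ^^ n) (quad (config_code cfg) m bad L) = quad (config_code (run M (choices_of m) cfg)) 1 b' (L + length (choices_of m))
      \<and> (b' = 0 \<longleftrightarrow> bad = 0 \<and> (\<forall>i<length (choices_of m). \<not> is_final M (run M (take i (choices_of m)) cfg)))"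
proof (induction n arbitrary: cfg m bad L)
  case 0
  then have "choices_of m = []" by simp
  then have "m = 1" using 0 by (subst (asm) choices_of.simps) (auto split: if_splits)
  then show ?case using \<open>choices_of m = []\<close> by (auto simp: run_Nil)
next
  case (Suc n)
  show ?case
  proof (cases "m \<le> 1")
    case True
    then have m1: "m = 1" using Suc by simp
    then have c: "choices_of m = []" by (simp add: choices_of.simps)
    have fx: "sim_step M (quad (config_code cfg) m bad L) = quad (config_code cfg) m bad L"
      using m1 by (simp add: sim_step_def)
    show ?thesis unfolding funpow_fix[of "sim_step M", OF fx] using m1 c by (auto simp: run_Nil)
  next
    case False
    have cm: "choices_of m = odd m # choices_of (m div 2)" using False by (subst choices_of.simps) simp
    let ?c' = "step M (odd m) cfg" and ?bad' = "bad + (if is_final M cfg then 1 else 0)"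
    have iv: "config_ok M ?c'" using step_correct[OF wf Suc.prems(1)] by blast
    have "length (choices_of (m div 2)) \<le> n" using Suc.prems(3) cm by simp
    moreover have "1 \<le> m div 2" using False by simp
    ultimately obtain b' where b': "(sim_step M ^^ n) (quad (config_code ?c') (m div 2) ?bad' (Suc L))
        = quad (config_code (run M (choices_of (m div 2)) ?c')) 1 b' (Suc L + length (choices_of (m div 2)))"
      "b' = 0 \<longleftrightarrow> ?bad' = 0 \<and>
         (\<forall>i<length (choices_of (m div 2)). \<not> is_final M (run M (take i (choices_of (m div 2))) ?c'))"
      using Suc.IH[OF iv] by blast
    have "(sim_step M ^^ Suc n) (quad (config_code cfg) m bad L) =
        quad (config_code (run M (choices_of m) cfg)) 1 b' (L + length (choices_of m))"
      by (simp only: funpow_Suc_right o_apply sim_step_consume[OF wf Suc.prems(1) False] b'(1))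
        (simp add: cm run_Cons)
    moreover have "(\<forall>i<length (choices_of m). \<not> is_final M (run M (take i (choices_of m)) cfg)) \<longleftrightarrow>
        \<not> is_final M cfg \<and>
        (\<forall>i<length (choices_of (m div 2)). \<not> is_final M (run M (take i (choices_of (m div 2))) ?c'))"
      unfolding cm by (rule never_final_Cons)
    ultimately show ?thesis using b'(2) by auto
  qed
qed

text \<open>The output tape s is bin y as bits; its code has rev s at the front.  Reading the
  reversed bit string least significant digit first yields 2^|s| + (value of s), which is
  y + 1 by the length-lexicographic numbering.  decode returns this number, or 0 if the
  tape contains other symbols.  The loop state is (rest of tape, value, 2^i, still valid).\<close>
definition decode_step :: "nat \<Rightarrow> nat" where
  "decode_step S = (if p1 S = 0 then S else
     quad (ntl (p1 S)) (p2 S + (nhd (p1 S) - 1) * p3 S) (2 * p3 S)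
       (if nhd (p1 S) = 1 \<or> nhd (p1 S) = 2 then p4 S else 0))"

definition decode_run :: "nat \<Rightarrow> nat" where "decode_run r = (decode_step ^^ r) (quad r 0 1 1)"
definition decode :: "nat \<Rightarrow> nat" where
  "decode r = (if p4 (decode_run r) = 1 then p2 (decode_run r) + p3 (decode_run r) else 0)"

fun rev_bin_value :: "sym list \<Rightarrow> nat option" where
  "rev_bin_value [] = Some 1"
| "rev_bin_value (Some 0 # l) = map_option (\<lambda>v. 2 * v) (rev_bin_value l)"
| "rev_bin_value (Some (Suc 0) # l) = map_option (\<lambda>v. 2 * v + 1) (rev_bin_value l)"
| "rev_bin_value _ = None"

primrec rev_digits_value :: "sym list \<Rightarrow> nat" where
  "rev_digits_value [] = 0" | "rev_digits_value (x # l) = (sym_code x - 1) + 2 * rev_digits_value l"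

definition bit_string :: "sym list \<Rightarrow> bool" where "bit_string l \<longleftrightarrow> set l \<subseteq> {Some 0, Some 1}"

lemma rev_bin_value_bit_string: "rev_bin_value l = (if bit_string l then Some (2 ^ length l + rev_digits_value l) else None)"
proof (induction l rule: rev_bin_value.induct)
  case (2 l) then show ?case by (auto simp: bit_string_def)
next
  case (3 l) then show ?case by (auto simp: bit_string_def)
qed (auto simp: bit_string_def)

lemma rev_bin_value_bin: "rev_bin_value (rev (bits (bin y))) = Some (Suc y)"
proof (induction y rule: bin.induct)
  case 1 then show ?case by (simp add: bits_def)
next
  case (2 n)
  have r: "rev (bits (bin (Suc n))) = Some (n mod 2) # rev (bits (bin (n div 2)))"
    by (simp add: bits_def)
  have IH: "rev_bin_value (rev (bits (bin (n div 2)))) = Some (Suc (n div 2))" by (rule 2)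
  show ?case
  proof (cases "n mod 2 = 0")
    case True
    then have "n = 2 * (n div 2)" using div_mult_mod_eq[of n 2] by simp
    then show ?thesis unfolding r using True IH by simp
  next
    case False
    then have m: "n mod 2 = Suc 0" by simp
    then have "n = 2 * (n div 2) + 1" using div_mult_mod_eq[of n 2] by simp
    then show ?thesis unfolding r m using IH by simp
  qed
qed

lemma rev_bin_value_inv: "rev_bin_value l = Some v \<Longrightarrow> 1 \<le> v \<and> l = rev (bits (bin (v - 1)))"
proof (induction l arbitrary: v rule: rev_bin_value.induct)
  case 1 then show ?case by (simp add: bits_def)
next
  case (2 l)
  then obtain w where w: "rev_bin_value l = Some w" "v = 2 * w" by auto
  with 2 have "1 \<le> w" "l = rev (bits (bin (w - 1)))" by auto
  moreover have "bin (2 * w - 1) = bin (w - 1) @ [0]"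
  proof -
    have "2 * w - 1 = Suc (2 * w - 2)" using \<open>1 \<le> w\<close> by simp
    moreover have "(2 * w - 2) div 2 = w - 1" "(2 * w - 2) mod 2 = 0" by auto
    ultimately show ?thesis by simp
  qed
  ultimately show ?case using w by (simp add: bits_def)
next
  case (3 l)
  then obtain w where w: "rev_bin_value l = Some w" "v = 2 * w + 1" by auto
  with 3 have "1 \<le> w" "l = rev (bits (bin (w - 1)))" by auto
  moreover have "bin (2 * w) = bin (w - 1) @ [1]"
  proof -
    have "2 * w = Suc (2 * w - 1)" using \<open>1 \<le> w\<close> by simp
    moreover have "(2 * w - 1) div 2 = w - 1" "(2 * w - 1) mod 2 = 1" using \<open>1 \<le> w\<close> by (cases w; simp)+
    ultimately show ?thesis by (metis bin.simps(2))
  qed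
  ultimately show ?case using w by (simp add: bits_def)
qed auto

lemma decode_step_iter: "length l \<le> n \<Longrightarrow>
  (decode_step ^^ n) (quad (tape_code l) acc p ok) = quad 0 (acc + p * rev_digits_value l) (p * 2 ^ length l) (if bit_string l then ok else 0)"
proof (induction n arbitrary: l acc p ok)
  case 0 then show ?case by (simp add: bit_string_def)
next
  case (Suc n)
  show ?case
  proof (cases l)
    case Nil
    have fx: "decode_step (quad (tape_code l) acc p ok) = quad (tape_code l) acc p ok" using Nil by (simp add: decode_step_def)
    show ?thesis unfolding funpow_fix[of decode_step, OF fx]
      using Nil by (simp add: bit_string_def)
  next
    case (Cons x l')
    have one: "decode_step (quad (tape_code l) acc p ok) = quad (tape_code l') (acc + (sym_code x - 1) * p) (2 * p)
        (if sym_code x = 1 \<or> sym_code x = 2 then ok else 0)"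
      using Cons by (simp add: decode_step_def)
    have v: "bit_string (x # l') \<longleftrightarrow> (sym_code x = 1 \<or> sym_code x = 2) \<and> bit_string l'"
      by (cases x) (auto simp: bit_string_def)
    show ?thesis
      unfolding funpow_Suc_right o_apply one
      using Suc.prems Cons by (subst Suc.IH) (auto simp: v algebra_simps)
  qed
qed

lemma decode_tape_code: "decode (tape_code l) = (case rev_bin_value l of Some v \<Rightarrow> v | None \<Rightarrow> 0)"
proof -
  have "length l \<le> tape_code l" unfolding tape_code_def using list_code_ge[of "map sym_code l"] by simp
  then have "decode_run (tape_code l) = quad 0 (rev_digits_value l) (2 ^ length l) (if bit_string l then 1 else 0)"
    unfolding decode_run_def by (simp add: decode_step_iter)
  then show ?thesis by (simp add: decode_def rev_bin_value_bit_string)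
qed

lemma decode_eq: "decode (tape_code (rev s)) = Suc y \<longleftrightarrow> s = bits (bin y)"
proof
  assume a: "decode (tape_code (rev s)) = Suc y"
  then obtain v where "rev_bin_value (rev s) = Some v" "v = Suc y"
    unfolding decode_tape_code by (auto split: option.splits)
  then show "s = bits (bin y)" using rev_bin_value_inv by fastforce
next
  assume "s = bits (bin y)"
  then show "decode (tape_code (rev s)) = Suc y" by (simp add: decode_tape_code rev_bin_value_bin)
qed

lemma PR_fun_decode: "PR_fun k f \<Longrightarrow> PR_fun k (\<lambda>xs. decode (f xs))"
proof -
  assume f: "PR_fun k f"
  have st: "PR_fun (Suc k) (\<lambda>ys. decode_step (ys ! k))"
    unfolding decode_step_def
    by (intro PR_fun_if PR_pred_eq PR_pred_disj PR_fun_p1 PR_fun_p2 PR_fun_p3 PR_fun_p4 PR_fun_proj PR_fun_quad PR_fun_ntl PR_fun_nhd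
        PR_fun_add PR_fun_mult PR_fun_sub PR_fun_const) auto
  have "PR_fun k (\<lambda>xs. (decode_step ^^ f xs) (quad (f xs) 0 1 1))"
    by (intro PR_fun_iter2[OF st] PR_fun_quad f PR_fun_const)
  then have d: "PR_fun k (\<lambda>xs. decode_run (f xs))" by (simp add: decode_run_def)
  show ?thesis unfolding decode_def
    by (intro PR_fun_if PR_pred_eq PR_fun_p4 PR_fun_p2 PR_fun_p3 PR_fun_add d PR_fun_const)
qed

primrec prepend :: "sym list \<Rightarrow> nat \<Rightarrow> nat" where
  "prepend [] T = T" | "prepend (a # l) T = ncons (sym_code a) (prepend l T)"

lemma tape_code_append: "tape_code (l1 @ l2) = prepend l1 (tape_code l2)"
  by (induction l1) auto

lemma prepend_append: "prepend (l1 @ l2) T = prepend l1 (prepend l2 T)"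
  by (induction l1) auto

definition dbl :: "nat list \<Rightarrow> nat list" where "dbl l = concat (map (\<lambda>b. [b, b]) l)"

definition prepend_dbl :: "nat \<Rightarrow> nat \<Rightarrow> nat" where "prepend_dbl x T = prepend (bits (dbl (bin x))) T"

lemma prepend_dbl_0: "prepend_dbl 0 T = T" by (simp add: prepend_dbl_def dbl_def bits_def)

lemma prepend_dbl_Suc: "prepend_dbl (Suc n) T = prepend_dbl (n div 2) (ncons (Suc (n mod 2)) (ncons (Suc (n mod 2)) T))"
  by (simp add: prepend_dbl_def dbl_def bits_def prepend_append)

text \<open>prepend_dbl x T is computed by a loop on the pair (x, T) consuming the last digit
  of bin x in each step; x steps suffice.\<close>
definition prepend_dbl_step :: "nat \<Rightarrow> nat" where
  "prepend_dbl_step S = (if fst (prod_decode S) = 0 then S else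
     prod_encode ((fst (prod_decode S) - 1) div 2,
       ncons (Suc ((fst (prod_decode S) - 1) mod 2)) (ncons (Suc ((fst (prod_decode S) - 1) mod 2)) (snd (prod_decode S)))))"

lemma prepend_dbl_iter: "x \<le> n \<Longrightarrow> (prepend_dbl_step ^^ n) (prod_encode (x, T)) = prod_encode (0, prepend_dbl x T)"
proof (induction n arbitrary: x T)
  case 0 then show ?case by (simp add: prepend_dbl_0)
next
  case (Suc n)
  show ?case
  proof (cases x)
    case 0
    have fx: "prepend_dbl_step (prod_encode (x, T)) = prod_encode (x, T)" using 0 by (simp add: prepend_dbl_step_def)
    show ?thesis unfolding funpow_fix[of prepend_dbl_step, OF fx]
      using 0 by (simp add: prepend_dbl_0)
  next
    case (Suc x')
    have one: "prepend_dbl_step (prod_encode (x, T)) = prod_encode (x' div 2, ncons (Suc (x' mod 2)) (ncons (Suc (x' mod 2)) T))"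
      using Suc by (simp add: prepend_dbl_step_def)
    show ?thesis unfolding funpow_Suc_right o_apply one
      using Suc.prems Suc by (subst Suc.IH) (auto simp: prepend_dbl_Suc)
  qed
qed

lemma PR_fun_prepend_dbl: "PR_fun k a \<Longrightarrow> PR_fun k b \<Longrightarrow> PR_fun k (\<lambda>xs. prepend_dbl (a xs) (b xs))"
proof -
  assume a: "PR_fun k a" and b: "PR_fun k b"
  have st: "PR_fun (Suc k) (\<lambda>ys. prepend_dbl_step (ys ! k))"
    unfolding prepend_dbl_step_def
    by (intro PR_fun_if PR_pred_eq PR_fun_fst PR_fun_snd PR_fun_proj PR_fun_enc PR_fun_ncons PR_fun_div PR_fun_mod PR_fun_Suc
        PR_fun_sub PR_fun_const) auto
  have "PR_fun k (\<lambda>xs. snd (prod_decode ((prepend_dbl_step ^^ a xs) (prod_encode (a xs, b xs)))))"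
    by (intro PR_fun_snd PR_fun_iter2[OF st] PR_fun_enc a b)
  then show ?thesis by (rule PR_fun_cong) (simp add: prepend_dbl_iter)
qed

definition input_code :: "nat list \<Rightarrow> nat" where "input_code xs = tape_code (bits (enc_tuple xs))"

lemma input_code_foldr: "input_code xs = foldr (\<lambda>x T. prepend_dbl x (ncons 1 (ncons 2 T))) xs 0"
proof (induction xs)
  case Nil then show ?case by (simp add: input_code_def enc_tuple_def bits_def)
next
  case (Cons x xs)
  have "input_code (x # xs) = tape_code (bits (dbl (bin x) @ [0, 1]) @ bits (enc_tuple xs))"
    by (simp add: input_code_def enc_tuple_def bits_def dbl_def)
  also have "\<dots> = prepend_dbl x (ncons 1 (ncons 2 (input_code xs)))"
    by (simp add: tape_code_append prepend_append prepend_dbl_def bits_def input_code_def numeral_2_eq_2)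
  finally show ?case using Cons by simp
qed

lemma PR_fun_input_code: "PR_fun k input_code"
proof -
  have "PR_fun k (\<lambda>xs. foldr (\<lambda>x T. prepend_dbl x (ncons 1 (ncons 2 T))) xs 0)"
    by (rule PR_fun_foldr) (intro PR_fun_prepend_dbl PR_fun_ncons PR_fun_const; assumption)
  then show ?thesis by (rule PR_fun_cong) (simp add: input_code_foldr)
qed

text \<open>For arguments xs and index z: the simulated run along choice_seq z (z steps are
  enough), whether it halts after exactly its length with the head at the right end,
  its decoded output (0 if it does not halt), and its length.\<close>
definition init_code :: "ptm \<Rightarrow> nat list \<Rightarrow> nat" where
  "init_code M xs = cfg_code 0 (nhd (input_code xs)) (ntl (input_code xs)) (start M)"
definition sim_run :: "ptm \<Rightarrow> nat list \<Rightarrow> nat \<Rightarrow> nat" where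
  "sim_run M xs z = (sim_step M ^^ z) (quad (init_code M xs) (Suc z) 0 0)"
definition sim_halts :: "ptm \<Rightarrow> nat list \<Rightarrow> nat \<Rightarrow> nat" where
  "sim_halts M xs z = (if p3 (sim_run M xs z) = 0 \<and> final_flag M (c_q (p1 (sim_run M xs z))) = 1 \<and> c_t (p1 (sim_run M xs z)) = 0 then 1 else 0)"
definition sim_output :: "ptm \<Rightarrow> nat list \<Rightarrow> nat \<Rightarrow> nat" where
  "sim_output M xs z = (if sim_halts M xs z = 1 then decode (c_sr (p1 (sim_run M xs z))) else 0)"
definition sim_length :: "ptm \<Rightarrow> nat list \<Rightarrow> nat \<Rightarrow> nat" where
  "sim_length M xs z = p4 (sim_run M xs z)"

lemma config_code_initial: "config_code (initial M v) = cfg_code 0 (nhd (tape_code v)) (ntl (tape_code v)) (start M)"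
  by (cases v) (auto simp: initial_def config_code_def)

lemma inv_initial: "wf_ptm M \<Longrightarrow> set v \<subseteq> tape_syms M \<Longrightarrow> config_ok M (initial M v)"
  by (cases v) (auto simp: initial_def config_ok_def wf_ptm_def tape_syms_def)

lemma set_bin: "set (bin x) \<subseteq> {0, 1}"
  by (induction x rule: bin.induct) auto

lemma set_enc: "set (enc_tuple xs) \<subseteq> {0, 1}"
  unfolding enc_tuple_def using set_bin by (auto simp: subset_iff)

lemma set_bits_enc: "wf_ptm M \<Longrightarrow> set (bits (enc_tuple xs)) \<subseteq> tape_syms M"
  using set_enc[of xs] unfolding bits_def tape_syms_def wf_ptm_def by auto

lemma sim_semantics:
  fixes xs :: "nat list" and z y :: nat
  assumes wf: "wf_ptm M"
  defines "v \<equiv> bits (enc_tuple xs)"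
  shows "sim_halts M xs z = (if \<exists>u. halts_with M v (choice_seq z) u then 1 else 0)"
    and "sim_length M xs z = length (choice_seq z)"
    and "sim_output M xs z = Suc y \<longleftrightarrow> halts_with M v (choice_seq z) (bits (bin y))"
proof -
  have iv: "config_ok M (initial M v)" using inv_initial[OF wf set_bits_enc[OF wf]] by (simp add: v_def)
  have init_code: "init_code M xs = config_code (initial M v)" by (simp add: init_code_def config_code_initial v_def input_code_def)
  have len: "length (choices_of (Suc z)) \<le> z" using length_choices_of[of "Suc z"] by simp
  obtain b' where b': "sim_run M xs z = quad (config_code (run M (choice_seq z) (initial M v))) 1 b' (0 + length (choice_seq z))"
    "b' = 0 \<longleftrightarrow> 0 = (0::nat) \<and> (\<forall>i<length (choice_seq z). \<not> is_final M (run M (take i (choice_seq z)) (initial M v)))"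
    using sim_correct[OF wf iv _ len, of 0 0] unfolding sim_run_def init_code choice_seq_def by auto
  obtain s a t q where R: "run M (choice_seq z) (initial M v) = (s, a, t, q)" by (metis prod_cases4)
  have hw: "halts_with M v (choice_seq z) u \<longleftrightarrow> b' = 0 \<and> u = s \<and> t = [] \<and> q \<in> finals M" for u
    using b'(2) R unfolding halts_with_def by auto
  have h: "sim_halts M xs z = (if b' = 0 \<and> q \<in> finals M \<and> t = [] then 1 else 0)"
    unfolding sim_halts_def b'(1) using R by (simp add: config_code_def final_flag_def)
  show "sim_halts M xs z = (if \<exists>u. halts_with M v (choice_seq z) u then 1 else 0)"
    unfolding h hw by auto
  show "sim_length M xs z = length (choice_seq z)" unfolding sim_length_def b'(1) by simp
  have o: "sim_output M xs z = (if b' = 0 \<and> q \<in> finals M \<and> t = [] then decode (tape_code (rev s)) else 0)"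
    unfolding sim_output_def h unfolding b'(1) using R by (simp add: config_code_def)
  show "sim_output M xs z = Suc y \<longleftrightarrow> halts_with M v (choice_seq z) (bits (bin y))"
    unfolding o hw using decode_eq by auto
qed

lemma PR_fun_sim_run: "wf_ptm M \<Longrightarrow> PR_fun (Suc k) (\<lambda>ys. sim_run M (take k ys) (ys ! k))"
proof -
  assume wf: "wf_ptm M"
  have st: "PR_fun (Suc (Suc k)) (\<lambda>ys. sim_step M (ys ! Suc k))"
    unfolding sim_step_def
    by (intro PR_fun_if PR_pred_le PR_fun_p1 PR_fun_p2 PR_fun_p3 PR_fun_p4 PR_fun_proj PR_fun_quad PR_fun_step_code[OF wf] PR_fun_mod
        PR_fun_div PR_fun_add PR_fun_final_flag[OF wf] PR_fun_c_q PR_fun_Suc PR_fun_const) auto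
  have ic: "PR_fun (Suc k) (\<lambda>ys. input_code (take k ys))" by (rule PR_fun_lift[OF PR_fun_input_code]) simp
  have "PR_fun (Suc k) (\<lambda>ys. (sim_step M ^^ (ys ! k)) (quad (init_code M (take k ys)) (Suc (ys ! k)) 0 0))"
    unfolding init_code_def
    by (intro PR_fun_iter2[OF st] PR_fun_quad PR_fun_cfg_code PR_fun_nhd PR_fun_ntl ic PR_fun_Suc PR_fun_proj PR_fun_const) auto
  then show ?thesis by (simp add: sim_run_def)
qed

lemma PR_fun_sim_halts: "wf_ptm M \<Longrightarrow> PR_fun (Suc k) (\<lambda>ys. sim_halts M (take k ys) (ys ! k))"
  unfolding sim_halts_def
  by (intro PR_fun_if PR_pred_conj PR_pred_eq PR_fun_p3 PR_fun_final_flag PR_fun_c_q PR_fun_c_t PR_fun_p1 PR_fun_sim_run PR_fun_const; assumption?)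

lemma PR_fun_sim_output: "wf_ptm M \<Longrightarrow> PR_fun (Suc k) (\<lambda>ys. sim_output M (take k ys) (ys ! k))"
  unfolding sim_output_def
  by (intro PR_fun_if PR_pred_eq PR_fun_sim_halts PR_fun_decode PR_fun_c_sr PR_fun_p1 PR_fun_sim_run PR_fun_const; assumption?)

lemma PR_fun_sim_length: "wf_ptm M \<Longrightarrow> PR_fun (Suc k) (\<lambda>ys. sim_length M (take k ys) (ys ! k))"
  unfolding sim_length_def by (intro PR_fun_p4 PR_fun_sim_run)

section \<open>Bernoulli trials with rational success probability\<close>

text \<open>For a < c, the j-th binary digit of a/c is bin_digit a c j; the digits sum up to
  a/c with weights 2^-(j+1).  Sampling j with probability 2^-(j+1) and reading the digit
  thus gives a Bernoulli trial with success probability a/c.\<close>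
lemma div_double: "(2 * X) div c = 2 * (X div c) + (2 * (X mod c)) div (c::nat)"
proof -
  have e: "X = c * (X div c) + X mod c" by simp
  have "2 * X = 2 * (c * (X div c) + X mod c)" using e by (rule arg_cong)
  then have "2 * X = c * (2 * (X div c)) + 2 * (X mod c)" by (simp only: distrib_left mult.left_commute)
  then have "(2 * X) div c = (c * (2 * (X div c)) + 2 * (X mod c)) div c" by simp
  also have "\<dots> = 2 * (X div c) + (2 * (X mod c)) div c"
    by (cases "c = 0") simp_all
  finally show ?thesis .
qed

definition bin_digit :: "nat \<Rightarrow> nat \<Rightarrow> nat \<Rightarrow> nat" where
  "bin_digit a c j = ((2 ^ Suc j * a) div c) mod 2"

lemma bin_digit_step:
  assumes "0 < c"
  shows "(2 ^ Suc n * a) div c = 2 * ((2 ^ n * a) div c) + bin_digit a c n"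
proof -
  let ?X = "2 ^ n * a"
  have e: "(2 * (?X mod c)) div c < 2" using assms by (simp add: less_mult_imp_div_less)
  have "(2 ^ Suc n * a) div c = 2 * (?X div c) + (2 * (?X mod c)) div c"
    using div_double[of ?X c] by (simp add: mult.assoc)
  moreover then have "bin_digit a c n = (2 * (?X mod c)) div c"
    unfolding bin_digit_def using e by simp
  ultimately show ?thesis by simp
qed

lemma bin_digit_le1: "0 < c \<Longrightarrow> bin_digit a c j = 0 \<or> bin_digit a c j = 1"
  by (auto simp: bin_digit_def)

lemma binexp_partial:
  assumes "0 < c" "a < c"
  shows "(\<Sum>j<n. (1/2::real) ^ Suc j * (if bin_digit a c j = 1 then 1 else 0)) = real ((2 ^ n * a) div c) / 2 ^ n"
proof (induction n)
  case 0 then show ?case using assms(2) by simp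
next
  case (Suc n)
  have d: "real (bin_digit a c n) = (if bin_digit a c n = 1 then 1 else 0)" using bin_digit_le1[OF assms(1), of a n] by auto
  have "(\<Sum>j<Suc n. (1/2::real) ^ Suc j * (if bin_digit a c j = 1 then 1 else 0)) =
      real ((2 ^ n * a) div c) / 2 ^ n + (1/2) ^ Suc n * real (bin_digit a c n)"
    using Suc d by simp
  also have "\<dots> = (2 * real ((2 ^ n * a) div c) + real (bin_digit a c n)) / 2 ^ Suc n"
    by (simp add: field_simps power_divide)
  also have "\<dots> = real ((2 ^ Suc n * a) div c) / 2 ^ Suc n"
    unfolding bin_digit_step[OF assms(1)] by simp
  finally show ?case .
qed

lemma binexp_sums:
  assumes "a < c"
  shows "(\<lambda>j. (1/2::real) ^ Suc j * (if bin_digit a c j = 1 then 1 else 0)) sums (real a / real c)"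
proof -
  have c: "0 < c" using assms by simp
  let ?e = "\<lambda>n. real ((2 ^ n * a) mod c) / (real c * 2 ^ n)"
  have ps: "(\<Sum>j<n. (1/2::real) ^ Suc j * (if bin_digit a c j = 1 then 1 else 0)) = real a / real c - ?e n" for n
  proof -
    have "real ((2 ^ n * a) div c) * real c = real (2 ^ n * a) - real ((2 ^ n * a) mod c)"
      using div_mult_mod_eq[of "2^n*a" c] by (metis add_diff_cancel_right' of_nat_add of_nat_mult)
    then show ?thesis unfolding binexp_partial[OF c assms] using c by (simp add: field_simps)
  qed
  have "?e \<longlonglongrightarrow> 0"
  proof (rule tendsto_sandwich[of "\<lambda>_. 0" _ _ "\<lambda>n. (1/2::real) ^ n"])
    show "\<forall>\<^sub>F n in sequentially. 0 \<le> ?e n" by simp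
    show "\<forall>\<^sub>F n in sequentially. ?e n \<le> (1/2) ^ n"
    proof (intro always_eventually allI)
      fix n
      have "real ((2 ^ n * a) mod c) \<le> real c" using c by simp
      then show "?e n \<le> (1/2) ^ n" using c by (simp add: field_simps power_divide)
    qed
    show "(\<lambda>n. (1/2::real) ^ n) \<longlonglongrightarrow> 0" by (rule LIMSEQ_realpow_zero) auto
  qed simp
  then have "(\<lambda>n. real a / real c - ?e n) \<longlonglongrightarrow> real a / real c - 0"
    by (intro tendsto_diff tendsto_const)
  then show ?thesis unfolding sums_def ps by simp
qed

text \<open>The fair coin with values 0 and 1 is r composed with the constant 0.\<close>
lemma PR_ext_coin: "PR_ext m (\<lambda>zs j. if j = 0 \<or> j = 1 then 1/2 else 0)"
proof -
  let ?rand = "\<lambda>xs y. if y = hd xs \<or> y = Suc (hd xs) then 1 / 2 else (0::real)"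
  have "PR_ext m (pf_comp ?rand (map dirac [\<lambda>_. 0]))"
  proof (rule PR_ext_comp)
    show "PR_ext (length (map dirac [\<lambda>_::nat list. 0])) ?rand"
      using PR_rand by (simp add: PR_PR_ext)
    show "\<forall>g\<in>set (map dirac [\<lambda>_::nat list. 0]). PR_ext m g"
      using PR_fun_const[of m 0] by (simp add: PR_fun_def)
  qed
  then show ?thesis
    by (rule PR_ext_cong) (rule ext, simp only: comp_dirac[OF refl], simp)
qed

text \<open>The geometric distribution: the first coin flip showing 0 happens at time j with
  probability 2^-(j+1).\<close>
lemma PR_ext_geo: "PR_ext m (\<lambda>ys j. (1/2::real) ^ Suc j)"
proof -
  have e: "(\<Sum>\<^sub>\<infinity>l\<in>{0<..}. (if (l::nat) = 0 \<or> l = Suc 0 then 1/2 else 0::real)) = 1/2"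
    by (subst infsum_single_supp[of "Suc 0"]) auto
  have "PR_ext m (pf_mu (\<lambda>zs j. if j = 0 \<or> j = 1 then 1/2 else 0))"
    by (rule PR_ext_mu) (rule PR_ext_coin)
  then show ?thesis by (rule PR_ext_cong) (simp add: pf_mu_def e)
qed

lemma PR_fun_bin_digit: "PR_fun k a \<Longrightarrow> PR_fun k c \<Longrightarrow> PR_fun k j \<Longrightarrow> PR_fun k (\<lambda>xs. bin_digit (a xs) (c xs) (j xs))"
  unfolding bin_digit_def by (intro PR_fun_mod PR_fun_div PR_fun_mult PR_fun_pow2 PR_fun_Suc PR_fun_const)

definition bern_prob :: "nat \<Rightarrow> nat \<Rightarrow> real" where
  "bern_prob a c = (if c \<le> a then 1 else real a / real c)"

lemma digit_one_prob:
  assumes "a < c"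
  shows "(\<Sum>\<^sub>\<infinity>j\<in>UNIV. (1/2::real) ^ Suc j * (if bin_digit a c j = 1 then 1 else 0)) = real a / real c"
  by (rule infsum_nat_sums[OF binexp_sums[OF assms]]) simp

lemma digit_zero_prob:
  assumes "a < c"
  shows "(\<Sum>\<^sub>\<infinity>j\<in>UNIV. (1/2::real) ^ Suc j * (if bin_digit a c j = 1 then 0 else 1)) = 1 - real a / real c"
proof -
  have "(\<lambda>j. (1/2::real) ^ Suc j - (1/2::real) ^ Suc j * (if bin_digit a c j = 1 then 1 else 0))
      sums (1 - real a / real c)"
    by (rule sums_diff[OF half_pow_sums binexp_sums[OF assms]])
  then have "(\<lambda>j. (1/2::real) ^ Suc j * (if bin_digit a c j = 1 then 0 else 1)) sums (1 - real a / real c)"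
    by (rule sums_cong[THEN iffD1, rotated]) auto
  then show ?thesis by (rule infsum_nat_sums) simp
qed

lemma bernoulli_from_digits:
  fixes a c :: nat
  defines "P \<equiv> \<lambda>j. (if c \<le> a then 0 else if bin_digit a c j = 1 then 0 else 1::nat)"
  shows "(\<Sum>\<^sub>\<infinity>j\<in>UNIV. (1/2::real) ^ Suc j * (if w = P j then 1 else 0)) =
     (if w = 0 then bern_prob a c else if w = 1 then 1 - bern_prob a c else 0)"
proof (cases "c \<le> a")
  case True
  have "(\<Sum>\<^sub>\<infinity>j\<in>UNIV. (1/2::real) ^ Suc j) = 1"
    by (rule infsum_nat_sums[OF half_pow_sums]) simp
  then show ?thesis using True by (simp add: P_def bern_prob_def)
next
  case False
  consider "w = 0" | "w = 1" | "w \<noteq> 0" "w \<noteq> 1" by blast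
  then show ?thesis
  proof cases
    case 1
    have "(\<Sum>\<^sub>\<infinity>j\<in>UNIV. (1/2::real) ^ Suc j * (if w = P j then 1 else 0)) =
        (\<Sum>\<^sub>\<infinity>j\<in>UNIV. (1/2::real) ^ Suc j * (if bin_digit a c j = 1 then 1 else 0))"
      using False 1 by (intro infsum_cong) (auto simp: P_def)
    then show ?thesis using False 1 digit_one_prob[of a c] by (simp add: bern_prob_def)
  next
    case 2
    have "(\<Sum>\<^sub>\<infinity>j\<in>UNIV. (1/2::real) ^ Suc j * (if w = P j then 1 else 0)) =
        (\<Sum>\<^sub>\<infinity>j\<in>UNIV. (1/2::real) ^ Suc j * (if bin_digit a c j = 1 then 0 else 1))"
      using False 2 by (intro infsum_cong) (auto simp: P_def)
    then show ?thesis using False 2 digit_zero_prob[of a c] by (simp add: bern_prob_def)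
  next
    case 3
    then have "\<And>j. w \<noteq> P j" by (auto simp: P_def)
    then show ?thesis using 3 by simp
  qed
qed

lemma PR_ext_bernoulli:
  assumes a: "PR_fun m a" and c: "PR_fun m c"
  shows "\<exists>B. PR_ext m B \<and> (\<forall>ys w. length ys = m \<longrightarrow>
     B ys w = (if w = 0 then bern_prob (a ys) (c ys) else if w = 1 then 1 - bern_prob (a ys) (c ys) else 0))"
proof -
  define Pd where "Pd = (\<lambda>zs. if c (take m zs) \<le> a (take m zs) then 0
      else if bin_digit (a (take m zs)) (c (take m zs)) (zs ! m) = 1 then 0 else 1::nat)"
  have pd: "PR_fun (Suc m) Pd"
    unfolding Pd_def
    by (intro PR_fun_if PR_pred_le PR_pred_eq PR_fun_bin_digit PR_fun_lift[OF a] PR_fun_lift[OF c]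
        PR_fun_proj PR_fun_const) auto
  define B where "B = pf_comp (dirac Pd) (map dirac (projs m) @ [\<lambda>ys j. (1/2::real) ^ Suc j])"
  have "PR_ext m B"
    unfolding B_def
  proof (rule PR_ext_comp)
    show "PR_ext (length (map dirac (projs m) @ [\<lambda>ys j. (1/2::real) ^ Suc j])) (dirac Pd)"
      using pd by (simp add: PR_fun_def)
    show "\<forall>g\<in>set (map dirac (projs m) @ [\<lambda>ys j. (1/2::real) ^ Suc j]). PR_ext m g"
      using PR_fun_projs[of m m] PR_ext_geo by (auto simp: PR_fun_def)
  qed
  moreover have "B ys w = (if w = 0 then bern_prob (a ys) (c ys) else if w = 1 then 1 - bern_prob (a ys) (c ys) else 0)"
    if "length ys = m" for ys w
  proof -
    have "B ys w = (\<Sum>\<^sub>\<infinity>j\<in>UNIV. (1/2::real) ^ Suc j * dirac Pd (ys @ [j]) w)"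
      unfolding B_def by (rule comp_bind[OF that])
    also have "\<dots> = (\<Sum>\<^sub>\<infinity>j\<in>UNIV. (1/2::real) ^ Suc j * (if w = (if c ys \<le> a ys then 0
           else if bin_digit (a ys) (c ys) j = 1 then 0 else 1) then 1 else 0))"
      using that by (intro infsum_cong) (simp add: dirac_def Pd_def nth_append)
    also have "\<dots> = (if w = 0 then bern_prob (a ys) (c ys) else if w = 1 then 1 - bern_prob (a ys) (c ys) else 0)"
      by (rule bernoulli_from_digits)
    finally show ?thesis .
  qed
  ultimately show ?thesis by blast
qed

lemma PR_ext_first_success:
  assumes a: "PR_fun (Suc k) a" and c: "PR_fun (Suc k) c"
  shows "\<exists>MU. PR_ext k MU \<and> (\<forall>xs y. length xs = k \<longrightarrow>
     MU xs y = bern_prob (a (xs @ [y])) (c (xs @ [y])) * (\<Prod>z<y. (1 - bern_prob (a (xs @ [z])) (c (xs @ [z])))))"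
proof -
  obtain B where B: "PR_ext (Suc k) B" and Bv: "\<And>ys w. length ys = Suc k \<Longrightarrow>
      B ys w = (if w = 0 then bern_prob (a ys) (c ys) else if w = 1 then 1 - bern_prob (a ys) (c ys) else 0)"
    using PR_ext_bernoulli[OF a c] by blast
  have Bs: "(\<Sum>\<^sub>\<infinity>l\<in>{0<..}. B ys l) = 1 - bern_prob (a ys) (c ys)" if "length ys = Suc k" for ys
    by (subst infsum_single_supp[of 1]) (auto simp: Bv[OF that])
  have "PR_ext k (pf_mu B)" using B by (intro PR_ext_mu) simp
  moreover have "pf_mu B xs y = bern_prob (a (xs @ [y])) (c (xs @ [y])) * (\<Prod>z<y. (1 - bern_prob (a (xs @ [z])) (c (xs @ [z]))))"
    if "length xs = k" for xs y
    unfolding pf_mu_def using that by (simp add: Bv Bs)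
  ultimately show ?thesis by blast
qed

section \<open>Kraft's inequality\<close>

definition prefix_free :: "bool list set \<Rightarrow> bool" where
  "prefix_free H \<longleftrightarrow> (\<forall>a\<in>H. \<forall>c. a @ c \<in> H \<longrightarrow> c = [])"

lemma split_first_bit:
  assumes "[] \<notin> H"
  shows "H = Cons True ` {l. True # l \<in> H} \<union> Cons False ` {l. False # l \<in> H}"
proof
  show "H \<subseteq> Cons True ` {l. True # l \<in> H} \<union> Cons False ` {l. False # l \<in> H}"
  proof
    fix x assume x: "x \<in> H"
    then obtain b l where "x = b # l" using assms by (cases x) auto
    then show "x \<in> Cons True ` {l. True # l \<in> H} \<union> Cons False ` {l. False # l \<in> H}"
      using x by (cases b) auto
  qed
qed auto

text \<open>Kraft's inequality for finite prefix-free sets of bit strings, by induction on a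
  length bound: splitting by the first bit halves the weights.\<close>
lemma kraft:
  "finite H \<Longrightarrow> prefix_free H \<Longrightarrow> (\<forall>b\<in>H. length b \<le> N) \<Longrightarrow> (\<Sum>b\<in>H. (1/2::real) ^ length b) \<le> 1"
proof (induction N arbitrary: H)
  case 0
  then have "H \<subseteq> {[]}" by auto
  then have "H = {} \<or> H = {[]}" by auto
  then show ?case by auto
next
  case (Suc N)
  show ?case
  proof (cases "[] \<in> H")
    case True
    then have "H = {[]}" using Suc.prems(2) unfolding prefix_free_def by fastforce
    then show ?thesis by simp
  next
    case False
    define H1 where "H1 = {l. True # l \<in> H}"
    define H0 where "H0 = {l. False # l \<in> H}"
    have "H1 = Cons True -` H" "H0 = Cons False -` H" unfolding H1_def H0_def by auto
    then have fin: "finite H1" "finite H0"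
      using Suc.prems(1) by (auto intro!: finite_vimageI simp: inj_on_def)
    have pf: "prefix_free H1" "prefix_free H0"
      using Suc.prems(2) unfolding prefix_free_def H1_def H0_def by auto
    have len: "\<forall>b\<in>H1. length b \<le> N" "\<forall>b\<in>H0. length b \<le> N"
      using Suc.prems(3) unfolding H1_def H0_def by auto
    have S1: "(\<Sum>b\<in>H1. (1/2::real) ^ length b) \<le> 1" by (rule Suc.IH[OF fin(1) pf(1) len(1)])
    have S0: "(\<Sum>b\<in>H0. (1/2::real) ^ length b) \<le> 1" by (rule Suc.IH[OF fin(2) pf(2) len(2)])
    have split: "H = Cons True ` H1 \<union> Cons False ` H0"
      using split_first_bit[OF False] unfolding H1_def H0_def .
    have "(\<Sum>b\<in>H. (1/2::real) ^ length b) =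
        (\<Sum>b\<in>Cons True ` H1. (1/2::real) ^ length b) + (\<Sum>b\<in>Cons False ` H0. (1/2::real) ^ length b)"
      unfolding split by (rule sum.union_disjoint) (use fin in auto)
    also have "\<dots> = (1/2) * (\<Sum>b\<in>H1. (1/2::real) ^ length b) + (1/2) * (\<Sum>b\<in>H0. (1/2::real) ^ length b)"
      by (simp add: sum.reindex sum_distrib_left)
    also have "\<dots> \<le> 1" using S1 S0 by simp
    finally show ?thesis .
  qed
qed

text \<open>The choice sequences of halting runs form a prefix-free set: a run halts only the
  first time it reaches a final configuration.\<close>
lemma halts_prefix_free: "prefix_free {bs. \<exists>u. halts_with M v bs u}"
  unfolding prefix_free_def
proof (intro ballI allI impI)
  fix a c assume "a \<in> {bs. \<exists>u. halts_with M v bs u}" "a @ c \<in> {bs. \<exists>u. halts_with M v bs u}"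
  then obtain u u' where h: "halts_with M v a u" "halts_with M v (a @ c) u'" by auto
  show "c = []"
  proof (rule ccontr)
    assume "c \<noteq> []"
    then have "length a < length (a @ c)" by simp
    then have "\<not> is_final M (run M (take (length a) (a @ c)) (initial M v))"
      using h(2) unfolding halts_with_def by blast
    moreover have "is_final M (run M a (initial M v))"
      using h(1) unfolding halts_with_def is_final_def by auto
    ultimately show False by simp
  qed
qed

lemma PR_fun_subst_index:
  assumes F: "PR_fun (Suc k) (\<lambda>ys. F (take k ys) (ys ! k))" and a: "PR_fun m a" and km: "k \<le> m"
  shows "PR_fun m (\<lambda>zs. F (take k zs) (a zs))"
proof -
  have "PR_fun m (\<lambda>zs. (\<lambda>ys. F (take k ys) (ys ! k)) (map (\<lambda>h. h zs) (projs k @ [a])))"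
    by (rule PR_fun_comp[OF F]) (use a km in \<open>auto intro: PR_fun_projs'\<close>)
  then show ?thesis
  proof (rule PR_fun_cong)
    fix zs :: "nat list" assume "length zs = m"
    then have "map (\<lambda>h. h zs) (projs k @ [a]) = take k zs @ [a zs]" "length (take k zs) = k"
      using km by (auto simp: map_projs)
    then show "(\<lambda>ys. F (take k ys) (ys ! k)) (map (\<lambda>h. h zs) (projs k @ [a])) = F (take k zs) (a zs)"
      by (simp add: nth_append)
  qed
qed

lemma PR_fun_sim_halts2: "wf_ptm M \<Longrightarrow> PR_fun m a \<Longrightarrow> k \<le> m \<Longrightarrow> PR_fun m (\<lambda>zs. sim_halts M (take k zs) (a zs))"
  by (rule PR_fun_subst_index[OF PR_fun_sim_halts])
lemma PR_fun_sim_length2: "wf_ptm M \<Longrightarrow> PR_fun m a \<Longrightarrow> k \<le> m \<Longrightarrow> PR_fun m (\<lambda>zs. sim_length M (take k zs) (a zs))"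
  by (rule PR_fun_subst_index[OF PR_fun_sim_length])
lemma PR_fun_sim_output2: "wf_ptm M \<Longrightarrow> PR_fun m a \<Longrightarrow> k \<le> m \<Longrightarrow> PR_fun m (\<lambda>zs. sim_output M (take k zs) (a zs))"
  by (rule PR_fun_subst_index[OF PR_fun_sim_output])

definition halt_weight :: "ptm \<Rightarrow> nat list \<Rightarrow> nat \<Rightarrow> real" where
  "halt_weight M xs z = (if \<exists>u. halts_with M (bits (enc_tuple xs)) (choice_seq z) u
     then (1/2) ^ length (choice_seq z) else 0)"

lemma halt_weight_sim:
  "wf_ptm M \<Longrightarrow> halt_weight M xs z = real (sim_halts M xs z) * (1/2) ^ sim_length M xs z"
  by (simp add: halt_weight_def sim_semantics)

text \<open>By Kraft's inequality the weights of the first indices sum to at most 1.\<close>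
lemma halt_weight_kraft: "(\<Sum>i<Suc y. halt_weight M xs i) \<le> 1"
proof -
  define v where "v = bits (enc_tuple xs)"
  define Z where "Z = {z. z < Suc y \<and> (\<exists>u. halts_with M v (choice_seq z) u)}"
  have "(\<Sum>i<Suc y. halt_weight M xs i) = (\<Sum>i\<in>Z. halt_weight M xs i)"
    unfolding Z_def by (rule sum.mono_neutral_right) (auto simp: halt_weight_def v_def)
  also have "\<dots> = (\<Sum>i\<in>Z. (1/2::real) ^ length (choice_seq i))"
    unfolding Z_def by (intro sum.cong) (auto simp: halt_weight_def v_def)
  also have "\<dots> = (\<Sum>b\<in>choice_seq ` Z. (1/2::real) ^ length b)"
    by (subst sum.reindex) (auto intro: inj_on_subset[OF inj_choice_seq])
  also have "\<dots> \<le> 1"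
  proof (rule kraft)
    show "finite (choice_seq ` Z)" unfolding Z_def by simp
    have "choice_seq ` Z \<subseteq> {bs. \<exists>u. halts_with M v bs u}"
      unfolding Z_def by auto
    then show "prefix_free (choice_seq ` Z)"
      using halts_prefix_free[of M v] unfolding prefix_free_def by blast
    show "\<forall>b\<in>choice_seq ` Z. length b \<le> y"
    proof
      fix b assume "b \<in> choice_seq ` Z"
      then obtain z where "z < Suc y" "b = choice_seq z" unfolding Z_def by auto
      then show "length b \<le> y" using length_choice_seq[of z] by simp
    qed
  qed
  finally show ?thesis .
qed

text \<open>Writing a distribution w on the indices as "first success" of independent trials:
  trial y succeeds with probability w y / (1 - \<Sum>i<y. w i).\<close>
lemma first_success_telescope:
  fixes w :: "nat \<Rightarrow> real"
  assumes w0: "\<And>z. 0 \<le> w z" and k: "\<And>z. (\<Sum>i<Suc z. w i) \<le> 1"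
  defines "W \<equiv> \<lambda>y. (\<Sum>i<y. w i)"
  defines "s \<equiv> \<lambda>y. (if 1 - W y \<le> w y then 1 else w y / (1 - W y))"
  shows "s y * (\<Prod>z<y. (1 - s z)) = w y"
proof -
  have key: "s y * (1 - W y) = w y" for y
  proof (cases "1 - W y \<le> w y")
    case True
    moreover have "W y + w y \<le> 1" using k[of y] by (simp add: W_def)
    ultimately show ?thesis by (simp add: s_def)
  next
    case False
    then have "1 - W y > 0" using w0[of y] by linarith
    then show ?thesis using False by (simp add: s_def)
  qed
  have "(\<Prod>z<y. (1 - s z)) = 1 - W y" for y
  proof (induction y)
    case 0 then show ?case by (simp add: W_def)
  next
    case (Suc y)
    have "(\<Prod>z<Suc y. (1 - s z)) = (1 - W y) * (1 - s y)" using Suc by simp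
    also have "\<dots> = (1 - W y) - s y * (1 - W y)" by (simp add: algebra_simps)
    also have "\<dots> = 1 - W (Suc y)" using key[of y] by (simp add: W_def)
    finally show ?case .
  qed
  then show ?thesis using key[of y] by simp
qed

text \<open>The natural number 2^y \<Sum>i<y. w i, computed by recursion on y.\<close>
definition halt_mass_code :: "ptm \<Rightarrow> nat list \<Rightarrow> nat \<Rightarrow> nat" where
  "halt_mass_code M xs y = rec_nat 0 (\<lambda>i acc. 2 * acc + 2 * (sim_halts M xs i * 2 ^ (i - sim_length M xs i))) y"

lemma PR_fun_halt_mass_code: "wf_ptm M \<Longrightarrow> PR_fun (Suc k) (\<lambda>ys. halt_mass_code M (take k ys) (ys ! k))"
proof -
  assume wf: "wf_ptm M"
  let ?g = "\<lambda>zs. 2 * zs ! Suc (Suc k) + 2 * (sim_halts M (take k zs) (zs ! Suc k) * 2 ^ (zs ! Suc k - sim_length M (take k zs) (zs ! Suc k)))"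
  have g: "PR_fun (Suc k + 2) ?g"
    by (intro PR_fun_add PR_fun_mult PR_fun_const PR_fun_proj PR_fun_pow2 PR_fun_sub PR_fun_sim_halts2[OF wf] PR_fun_sim_length2[OF wf]) auto
  have "PR_fun (Suc k) (\<lambda>ys. rec_nat ((\<lambda>_. 0) ys) (\<lambda>i acc. ?g (ys @ [i, acc])) (ys ! k))"
    by (rule PR_fun_rec_nat[OF PR_fun_const g PR_fun_proj]) simp
  then show ?thesis
  proof (rule PR_fun_cong)
    fix ys :: "nat list" assume l: "length ys = Suc k"
    then have "(\<lambda>i acc. ?g (ys @ [i, acc])) = (\<lambda>i acc. 2 * acc + 2 * (sim_halts M (take k ys) i * 2 ^ (i - sim_length M (take k ys) i)))"
      by (auto simp: nth_append)
    then show "rec_nat ((\<lambda>_. 0) ys) (\<lambda>i acc. ?g (ys @ [i, acc])) (ys ! k) = halt_mass_code M (take k ys) (ys ! k)"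
      by (simp add: halt_mass_code_def)
  qed
qed

lemma real_pow_diff: "l \<le> y \<Longrightarrow> real ((2::nat) ^ (y - l)) = 2 ^ y * (1/2) ^ l"
proof -
  assume "l \<le> y"
  then have "(2::real) ^ (y - l) = 2 ^ y / 2 ^ l" by (rule power_diff[rotated]) simp
  moreover have "real ((2::nat) ^ (y - l)) = (2::real) ^ (y - l)" by simp
  ultimately show ?thesis by (simp add: power_divide)
qed

lemma sim_length_le: "wf_ptm M \<Longrightarrow> sim_length M xs y \<le> y"
  using length_choice_seq[of y] by (simp add: sim_semantics)

lemma halt_mass_code_real:
  assumes wf: "wf_ptm M"
  shows "real (halt_mass_code M xs y) = 2 ^ y * (\<Sum>i<y. halt_weight M xs i)"
proof (induction y)
  case 0 then show ?case by (simp add: halt_mass_code_def)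
next
  case (Suc y)
  have p: "real (2 ^ (y - sim_length M xs y)) = 2 ^ y * (1/2) ^ sim_length M xs y"
    using sim_length_le[OF wf] by (rule real_pow_diff)
  have "real (halt_mass_code M xs (Suc y)) =
      2 * real (halt_mass_code M xs y) + 2 * (real (sim_halts M xs y) * real (2 ^ (y - sim_length M xs y)))"
    by (simp add: halt_mass_code_def)
  also have "\<dots> = 2 ^ Suc y * (\<Sum>i<Suc y. halt_weight M xs i)"
    unfolding Suc p by (simp add: halt_weight_sim[OF wf] algebra_simps)
  finally show ?case .
qed

definition trial_num :: "ptm \<Rightarrow> nat list \<Rightarrow> nat \<Rightarrow> nat" where
  "trial_num M xs y = sim_halts M xs y * 2 ^ (y - sim_length M xs y)"

definition trial_den :: "ptm \<Rightarrow> nat list \<Rightarrow> nat \<Rightarrow> nat" where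
  "trial_den M xs y = 2 ^ y - halt_mass_code M xs y"

lemma bern_prob_trial:
  fixes xs :: "nat list"
  assumes wf: "wf_ptm M"
  defines "w \<equiv> halt_weight M xs" and "W \<equiv> \<lambda>y. \<Sum>i<y. halt_weight M xs i"
  shows "bern_prob (trial_num M xs y) (trial_den M xs y) = (if 1 - W y \<le> w y then 1 else w y / (1 - W y))"
proof -
  have "(\<Sum>i<Suc y. halt_weight M xs i) \<le> 1" by (rule halt_weight_kraft)
  moreover have "0 \<le> halt_weight M xs y" by (simp add: halt_weight_def)
  ultimately have "W y \<le> 1" unfolding W_def by simp
  then have "real (halt_mass_code M xs y) \<le> 2 ^ y"
    unfolding halt_mass_code_real[OF wf] W_def by (simp add: mult_left_le)
  then have mass: "halt_mass_code M xs y \<le> 2 ^ y"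
    by (metis of_nat_le_iff of_nat_numeral of_nat_power)
  have ra: "real (trial_num M xs y) = 2 ^ y * w y"
    using real_pow_diff[OF sim_length_le[OF wf]]
    by (simp add: trial_num_def w_def halt_weight_sim[OF wf])
  have rc: "real (trial_den M xs y) = 2 ^ y * (1 - W y)"
    using mass by (simp add: trial_den_def of_nat_diff halt_mass_code_real[OF wf] W_def algebra_simps)
  have "trial_den M xs y \<le> trial_num M xs y \<longleftrightarrow> real (trial_den M xs y) \<le> real (trial_num M xs y)"
    by (rule of_nat_le_iff[symmetric])
  also have "\<dots> \<longleftrightarrow> 1 - W y \<le> w y" unfolding ra rc by simp
  finally show ?thesis unfolding bern_prob_def ra rc by simp
qed

lemma PR_ext_halt_weight:
  assumes wf: "wf_ptm M"
  shows "PR_ext k (\<lambda>xs z. halt_weight M xs z)"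
proof -
  define num where "num = (\<lambda>ys. trial_num M (take k ys) (ys ! k))"
  define den where "den = (\<lambda>ys. trial_den M (take k ys) (ys ! k))"
  have "PR_fun (Suc k) num" unfolding num_def trial_num_def
    by (intro PR_fun_mult PR_fun_pow2 PR_fun_sub PR_fun_sim_halts[OF wf] PR_fun_sim_length[OF wf] PR_fun_proj) auto
  moreover have "PR_fun (Suc k) den" unfolding den_def trial_den_def
    by (intro PR_fun_sub PR_fun_pow2 PR_fun_halt_mass_code[OF wf] PR_fun_proj) auto
  ultimately obtain MU where MU: "PR_ext k MU" and MUv: "\<And>xs y. length xs = k \<Longrightarrow>
     MU xs y = bern_prob (num (xs @ [y])) (den (xs @ [y])) * (\<Prod>z<y. (1 - bern_prob (num (xs @ [z])) (den (xs @ [z]))))"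
    using PR_ext_first_success by blast
  show ?thesis
  proof (rule PR_ext_cong[OF MU])
    fix xs :: "nat list" assume l: "length xs = k"
    have "num (xs @ [z]) = trial_num M xs z" "den (xs @ [z]) = trial_den M xs z" for z
      using l by (auto simp: num_def den_def nth_append)
    then show "MU xs = halt_weight M xs"
      using MUv[OF l] first_success_telescope[of "halt_weight M xs", OF _ halt_weight_kraft]
      by (auto simp: bern_prob_trial[OF wf] halt_weight_def)
  qed
qed

lemma PR_ext_output_indicator:
  assumes wf: "wf_ptm M"
  shows "PR_ext (Suc k) (\<lambda>ys y. if sim_output M (take k ys) (ys ! k) = Suc y then 1 else 0)"
proof -
  define h where "h = (\<lambda>ys. if sim_output M (take k ys) (ys ! k) = Suc (ys ! Suc k) then 0 else 1::nat)"
  have "PR_fun (Suc k + 1) h" unfolding h_def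
    by (intro PR_fun_if PR_pred_eq PR_fun_sim_output2[OF wf] PR_fun_Suc PR_fun_proj PR_fun_const) auto
  then have "PR_ext (Suc k) (\<lambda>ys y. if h (ys @ [y]) = 0 \<and> (\<forall>z<y. h (ys @ [z]) \<noteq> 0) then 1 else 0)"
    by (rule PR_ext_mu_dirac)
  then show ?thesis
    by (rule PR_ext_cong) (auto simp: h_def nth_append)
qed

lemma IO_as_index_sum:
  assumes wf: "wf_ptm M"
  shows "IO M (bits (enc_tuple xs)) (bits (bin y)) =
    (\<Sum>\<^sub>\<infinity>z\<in>UNIV. halt_weight M xs z * (if sim_output M xs z = Suc y then 1 else 0))"
proof -
  let ?v = "bits (enc_tuple xs)"
  let ?Z = "{z. halts_with M ?v (choice_seq z) (bits (bin y))}"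
  have "(\<Sum>\<^sub>\<infinity>z\<in>UNIV. halt_weight M xs z * (if sim_output M xs z = Suc y then 1 else 0)) =
      (\<Sum>\<^sub>\<infinity>z\<in>UNIV. (if halts_with M ?v (choice_seq z) (bits (bin y)) then (1/2::real) ^ length (choice_seq z) else 0))"
    by (intro infsum_cong) (auto simp: halt_weight_def sim_semantics(3)[OF wf])
  also have "\<dots> = (\<Sum>\<^sub>\<infinity>z\<in>?Z. (1/2::real) ^ length (choice_seq z))"
    by (rule infsum_cong_neutral) auto
  also have "\<dots> = (\<Sum>\<^sub>\<infinity>bs\<in>choice_seq ` ?Z. (1/2::real) ^ length bs)"
    by (subst infsum_reindex) (auto intro: inj_on_subset[OF inj_choice_seq] simp: o_def)
  also have "choice_seq ` ?Z = {bs. halts_with M ?v bs (bits (bin y))}"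
    using choice_seq_surj by (auto intro: image_eqI[of _ _ "choice_index _ - 1"])
  finally show ?thesis unfolding IO_def ..
qed

text \<open>First sample the index z of a halting choice sequence, then output whatever the run
  along choice_seq z outputs.\<close>
theorem mainTheorem12:
  assumes "PC k f"
  shows "\<exists>g. PR k g \<and> (\<forall>xs. length xs = k \<longrightarrow> g xs = f xs)"
proof -
  from assms obtain M where wf: "wf_ptm M" and
    f: "\<And>xs y. length xs = k \<Longrightarrow> f xs y = IO M (bits (enc_tuple xs)) (bits (bin y))"
    unfolding PC_def by auto
  let ?OUT = "\<lambda>ys y. if sim_output M (take k ys) (ys ! k) = Suc y then 1 else 0::real"
  let ?G = "pf_comp ?OUT (map dirac (projs k) @ [\<lambda>xs z. halt_weight M xs z])"
  have "PR_ext k ?G"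
  proof (rule PR_ext_comp)
    show "PR_ext (length (map dirac (projs k) @ [\<lambda>xs z. halt_weight M xs z])) ?OUT"
      using PR_ext_output_indicator[OF wf] by simp
    show "\<forall>g\<in>set (map dirac (projs k) @ [\<lambda>xs z. halt_weight M xs z]). PR_ext k g"
      using PR_fun_projs[of k k] PR_ext_halt_weight[OF wf] by (auto simp: PR_fun_def)
  qed
  moreover have "?G xs = f xs" if "length xs = k" for xs
    using that by (intro ext) (simp add: comp_bind f IO_as_index_sum[OF wf] nth_append)
  ultimately have "PR_ext k f" by (rule PR_ext_cong)
  then show ?thesis unfolding PR_ext_def .
qed

end
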